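(* For every $f\in V_{\mathcal{B}}$, $\lim_{n\to\infty}\|\mathcal{L}^nf\|_s=0$. Moreover $\mathcal{L}$ maps $V_{\mathcal{B}}$ into itself and the resolvent $(\mathrm{Id}-\mathcal{L})^{-1}:V_{\mathcal{B}}\to V_{\mathcal{B}}$ is a well-defined bounded operator.
   Context: Let $b:\mathbb{R}^d\to\mathbb{R}^d$ satisfy (A) local Lipschitz continuity: for each $x_0\in\mathbb{R}^d$ there are $K>0$, $\delta_0>0$ with $|b(x_0)-b(x)|\le K|x_0-x|$ whenever $|x_0-x|<\delta_0$; and (B) dissipativity: there are $c_1\in\mathbb{R}$, $c_2>0$ with $\langle b(x),x\rangle\le c_1-c_2|x|^2$ for all $x\in\mathbb{R}^d$. Let $X^x_t$ be the solution of $dX_t^x=b(X_t^x)\,dt+dW_t$, $X_0^x=x$, with $W$ a standard Brownian motion in $\mathbb{R}^d$, and let $\theta_t$ be the flow of $\dot\theta=b(\theta)$. It is known that the law of $X_1^x$ has a density $\kappa(x,y)$ (in $y$, w.r.t. Lebesgue measure), continuous in $(x,y)$, and that there are constants $\lambda_0,\lambda_1\in(0,1]$, $C_0,C_1\ge 1$ such that for all $x,y$: $C_0^{-1}e^{-|\theta_1(x)-y|^2/\lambda_0}\le\kappa(x,y)\le C_0e^{-\lambda_0|\theta_1(x)-y|^2}$ and $|\nabla_x\kappa(x,y)|,|\nabla_y\kappa(x,y)|\le C_1e^{-\lambda_1|\theta_1(x)-y|^2}$. The transfer operator $\mathcal{L}=\mathcal{L}_0:L^1(\mathbb{R}^d)\to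 L^1(\mathbb{R}^d)$ is $\mathcal{L}f(y)=\int_{\mathbb{R}^d}\kappa(x,y)f(x)\,dx$. Spaces: for $\alpha\ge0$ let $\rho_\alpha(x)=(1+|x|^2)^{\alpha/2}$ and let $L^1_\alpha$ be the space of measurable $f:\mathbb{R}^d\to\mathbb{R}$ with $\|f\|_{L^1_\alpha}=\int\rho_\alpha(x)|f(x)|\,dx<\infty$. Fix a compact set $D\subset\mathbb{R}^d$ (a compact neighbourhood of $0$). The strong norm is $\|f\|_s=\|f\|_{L^1_2}+\|1_Df\|_{L^2}$ and the strong space is $\mathcal{B}=\{f\in L^1_2:\|f\|_s<\infty\}$. Set $V_{\mathcal{B}}=\{f\in\mathcal{B}:\int f\,dx=0\}$ and $V_{L^1}=\{f\in L^1:\int f\,dx=0\}$. *)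

theory Defs
  imports "HOL-Probability.Probability"
begin

definition gauss_density :: "real \<Rightarrow> real^'d \<Rightarrow> real" where
  "gauss_density \<tau> z =
     (2 * pi * \<tau>) powr (- real CARD('d) / 2) * exp (- (norm z)\<^sup>2 / (2 * \<tau>))"

definition std_brownian :: "'a measure \<Rightarrow> (real \<Rightarrow> 'a \<Rightarrow> real^'d) \<Rightarrow> bool" where
  "std_brownian M W \<longleftrightarrow>
     prob_space M \<and>
     (\<forall>\<omega>\<in>space M. W 0 \<omega> = 0 \<and> continuous_on {0..} (\<lambda>t. W t \<omega>)) \<and>
     (\<forall>s t. 0 \<le> s \<and> s < t \<longrightarrow>
        distributed M lborel (\<lambda>\<omega>. W t \<omega> - W s \<omega>) (\<lambda>z. ennreal (gauss_density (t - s) z))) \<and>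
     (\<forall>ts :: real list. sorted_wrt (<) ts \<and> (\<forall>t\<in>set ts. 0 \<le> t) \<longrightarrow>
        prob_space.indep_vars M (\<lambda>_. borel) (\<lambda>i \<omega>. W (ts ! Suc i) \<omega> - W (ts ! i) \<omega>)
          {..<length ts - 1})"

definition sde_solution ::
  "'a measure \<Rightarrow> (real^'d \<Rightarrow> real^'d) \<Rightarrow> (real \<Rightarrow> 'a \<Rightarrow> real^'d) \<Rightarrow> real^'d
     \<Rightarrow> (real \<Rightarrow> 'a \<Rightarrow> real^'d) \<Rightarrow> bool" where
  "sde_solution M b W x X \<longleftrightarrow>
     (\<forall>\<omega>\<in>space M. continuous_on {0..} (\<lambda>t. X t \<omega>) \<and>
        (\<forall>t\<ge>0. X t \<omega> = x + integral {0..t} (\<lambda>s. b (X s \<omega>)) + W t \<omega>))"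

definition is_forward_flow :: "(real^'d \<Rightarrow> real^'d) \<Rightarrow> (real \<Rightarrow> real^'d \<Rightarrow> real^'d) \<Rightarrow> bool" where
  "is_forward_flow b \<theta> \<longleftrightarrow>
     (\<forall>x. \<theta> 0 x = x \<and>
        (\<forall>t\<ge>0. ((\<lambda>s. \<theta> s x) has_vector_derivative b (\<theta> t x)) (at t within {0..})))"

definition transfer :: "(real^'d \<Rightarrow> real^'d \<Rightarrow> real) \<Rightarrow> (real^'d \<Rightarrow> real) \<Rightarrow> real^'d \<Rightarrow> real" where
  "transfer \<kappa> f y = (\<integral>x. \<kappa> x y * f x \<partial>lebesgue)"

definition L1_2_norm :: "(real^'d \<Rightarrow> real) \<Rightarrow> ennreal" where
  "L1_2_norm f = (\<integral>\<^sup>+x. ennreal ((1 + (norm x)\<^sup>2) * \<bar>f x\<bar>) \<partial>lebesgue)"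

definition L2_on_norm :: "(real^'d) set \<Rightarrow> (real^'d \<Rightarrow> real) \<Rightarrow> ennreal" where
  "L2_on_norm D f =
     (let I = (\<integral>\<^sup>+x. ennreal (indicator D x * (f x)\<^sup>2) \<partial>lebesgue)
      in if I = \<infinity> then \<infinity> else ennreal (sqrt (enn2real I)))"

definition strong_norm :: "(real^'d) set \<Rightarrow> (real^'d \<Rightarrow> real) \<Rightarrow> ennreal" where
  "strong_norm D f = L1_2_norm f + L2_on_norm D f"

definition strong_space :: "(real^'d) set \<Rightarrow> (real^'d \<Rightarrow> real) set" where
  "strong_space D = {f. f \<in> borel_measurable lebesgue \<and> strong_norm D f < \<infinity>}"

definition V_B :: "(real^'d) set \<Rightarrow> (real^'d \<Rightarrow> real) set" where
  "V_B D = {f \<in> strong_space D. (\<integral>x. f x \<partial>lebesgue) = 0}"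

end

theory Submission
  imports Defs
begin

text \<open>
  The time-one transition kernel satisfies a Lyapunov drift condition for \<open>rho2 x = 1 + |x|\<^sup>2\<close>
  (the dissipative flow contracts \<open>|x|\<^sup>2\<close>, and the Gaussian upper bound controls the spread
  of the kernel around \<open>\<theta> 1 x\<close>) and, by the Gaussian lower bound, a minorization by Lebesgue
  measure on the unit ball, uniformly over a sublevel set of \<open>rho2\<close>. Harris' theorem in the form
  of Hairer and Mattingly then makes the transfer operator a strict contraction on mean-zero
  functions for the norm \<open>L1_norm f + \<beta> * L1_2_norm f\<close>, which is equivalent to the \<open>L\<^sup>1\<^sub>2\<close> norm.
  Hence the iterates decay geometrically in \<open>L\<^sup>1\<^sub>2\<close>; since the kernel is bounded, the operator maps
  \<open>L\<^sup>1\<close> into \<open>L\<^sup>\<infinity>\<close>, which controls the \<open>L\<^sup>2\<close> part of the strong norm on the compact set \<open>D\<close>.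
  The Neumann series of the iterates gives a bounded resolvent, and \<open>Id - transfer \<kappa>\<close> is injective
  because a mean-zero fixed point of a strict contraction vanishes.
\<close>

section \<open>Weighted integrable functions\<close>

lemma sigma_finite_lebesgue: "sigma_finite_measure (lebesgue :: ('a::euclidean_space) measure)"
proof -
  obtain A where A: "countable A" "A \<subseteq> sets (lborel::'a measure)" "\<Union>A = space lborel"
      "\<forall>a\<in>A. emeasure lborel a \<noteq> \<infinity>"
    using lborel.sigma_finite_countable by blast
  show ?thesis
    by unfold_locales (use A in \<open>auto intro!: exI[of _ A]\<close>)
qed

interpretation leb: sigma_finite_measure "lebesgue :: ('a::euclidean_space) measure"
  by (rule sigma_finite_lebesgue)

interpretation leb2: pair_sigma_finite "lebesgue :: ('a::euclidean_space) measure"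
  "lebesgue :: ('b::euclidean_space) measure" ..

definition rho2 :: "real^'d \<Rightarrow> real" where "rho2 x = 1 + (norm x)\<^sup>2"

definition L1_norm :: "(real^'d \<Rightarrow> real) \<Rightarrow> ennreal" where
  "L1_norm f = (\<integral>\<^sup>+x. ennreal \<bar>f x\<bar> \<partial>lebesgue)"

definition in_L1_2 :: "(real^'d \<Rightarrow> real) \<Rightarrow> bool" where
  "in_L1_2 f \<longleftrightarrow> f \<in> borel_measurable lebesgue \<and> L1_2_norm f < \<infinity>"

definition pos_part :: "(real^'d \<Rightarrow> real) \<Rightarrow> real^'d \<Rightarrow> real" where
  "pos_part f x = max (f x) 0"

definition neg_part :: "(real^'d \<Rightarrow> real) \<Rightarrow> real^'d \<Rightarrow> real" where
  "neg_part f x = max (- f x) 0"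

lemma rho2_ge_1: "1 \<le> rho2 x"
  by (simp add: rho2_def)

lemma rho2_measurable[measurable]: "rho2 \<in> borel_measurable lebesgue"
  by (rule measurable_completion) (unfold rho2_def measurable_lborel2, measurable)

lemma L1_2_norm_eq: "L1_2_norm f = (\<integral>\<^sup>+x. ennreal (rho2 x * \<bar>f x\<bar>) \<partial>lebesgue)"
  unfolding L1_2_norm_def rho2_def ..

lemma pos_part_measurable[measurable]: "f \<in> borel_measurable M \<Longrightarrow> pos_part f \<in> borel_measurable M"
  unfolding pos_part_def by measurable

lemma neg_part_measurable[measurable]: "f \<in> borel_measurable M \<Longrightarrow> neg_part f \<in> borel_measurable M"
  unfolding neg_part_def by measurable

lemma pos_part_nonneg: "0 \<le> pos_part f x"
  and neg_part_nonneg: "0 \<le> neg_part f x"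
  and pos_neg_part_diff: "f x = pos_part f x - neg_part f x"
  and pos_neg_part_abs: "\<bar>f x\<bar> = pos_part f x + neg_part f x"
  and pos_part_le_abs: "pos_part f x \<le> \<bar>f x\<bar>"
  and neg_part_le_abs: "neg_part f x \<le> \<bar>f x\<bar>"
  by (auto simp: pos_part_def neg_part_def)

lemma ennreal_pos_part: "ennreal (pos_part f x) = ennreal (f x)"
  and ennreal_neg_part: "ennreal (neg_part f x) = ennreal (- f x)"
  by (auto simp: pos_part_def neg_part_def max_def ennreal_neg)

lemma L1_norm_le_L1_2_norm: "L1_norm f \<le> L1_2_norm f"
  unfolding L1_norm_def L1_2_norm_eq
  by (intro nn_integral_mono ennreal_leI) (metis mult_right_mono[OF rho2_ge_1 abs_ge_zero] mult_1)

lemma in_L1_2_L1_norm_finite: "in_L1_2 f \<Longrightarrow> L1_norm f < \<infinity>"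
  using L1_norm_le_L1_2_norm in_L1_2_def le_less_trans by blast

lemma in_L1_2_integrable: "in_L1_2 f \<Longrightarrow> integrable lebesgue f"
  using in_L1_2_L1_norm_finite[of f] unfolding in_L1_2_def L1_norm_def
  by (intro integrableI_bounded) auto

lemma L1_2_norm_finite: "in_L1_2 f \<Longrightarrow> L1_2_norm f = ennreal (enn2real (L1_2_norm f))"
  unfolding in_L1_2_def by (simp add: less_top)

lemma integral_abs_le_L1_2_norm:
  assumes "in_L1_2 f" shows "(\<integral>x. \<bar>f x\<bar> \<partial>lebesgue) \<le> enn2real (L1_2_norm f)"
proof -
  have [measurable]: "f \<in> borel_measurable lebesgue" using assms in_L1_2_def by auto
  have "(\<integral>x. \<bar>f x\<bar> \<partial>lebesgue) = enn2real (L1_norm f)"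
    unfolding L1_norm_def by (subst integral_eq_nn_integral) auto
  also have "\<dots> \<le> enn2real (L1_2_norm f)"
    using L1_norm_le_L1_2_norm assms unfolding in_L1_2_def
    by (intro enn2real_mono) auto
  finally show ?thesis .
qed

lemma integral_pos_neg_part:
  assumes "integrable lebesgue f"
  shows "integral\<^sup>L lebesgue f
    = enn2real (\<integral>\<^sup>+x. pos_part f x \<partial>lebesgue) - enn2real (\<integral>\<^sup>+x. neg_part f x \<partial>lebesgue)"
  using real_lebesgue_integral_def[OF assms] by (simp add: ennreal_pos_part ennreal_neg_part)

lemma L1_norm_pos_neg_part:
  assumes [measurable]: "f \<in> borel_measurable lebesgue"
  shows "L1_norm f = (\<integral>\<^sup>+x. pos_part f x \<partial>lebesgue) + (\<integral>\<^sup>+x. neg_part f x \<partial>lebesgue)"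
  unfolding L1_norm_def
  by (subst nn_integral_add[symmetric])
     (auto simp: pos_neg_part_abs[of f] pos_part_nonneg neg_part_nonneg intro!: nn_integral_cong)

lemma L1_2_norm_cong: "AE x in lebesgue. f x = g x \<Longrightarrow> L1_2_norm f = L1_2_norm g"
  unfolding L1_2_norm_def by (intro nn_integral_cong_AE) auto

lemma L1_2_norm_zero_AE:
  assumes [measurable]: "f \<in> borel_measurable lebesgue" and "L1_2_norm f = 0"
  shows "AE x in lebesgue. f x = 0"
proof -
  have "AE x in lebesgue. ennreal (rho2 x * \<bar>f x\<bar>) = 0"
    using assms(2) unfolding L1_2_norm_eq by (subst nn_integral_0_iff_AE[symmetric]) auto
  then show ?thesis
  proof eventually_elim
    fix x assume "ennreal (rho2 x * \<bar>f x\<bar>) = 0"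
    then have "rho2 x * \<bar>f x\<bar> \<le> 0" by (simp add: ennreal_eq_0_iff)
    then show "f x = 0" using rho2_ge_1[of x] by (smt (verit) mult_pos_pos abs_ge_zero)
  qed
qed

lemma L1_2_norm_add_le:
  assumes [measurable]: "f \<in> borel_measurable lebesgue" "g \<in> borel_measurable lebesgue"
  shows "L1_2_norm (\<lambda>x. f x + g x) \<le> L1_2_norm f + L1_2_norm g"
proof -
  have "L1_2_norm (\<lambda>x. f x + g x)
      \<le> (\<integral>\<^sup>+x. ennreal (rho2 x * \<bar>f x\<bar>) + ennreal (rho2 x * \<bar>g x\<bar>) \<partial>lebesgue)"
    unfolding L1_2_norm_eq
  proof (intro nn_integral_mono)
    fix x
    have "rho2 x * \<bar>f x + g x\<bar> \<le> rho2 x * \<bar>f x\<bar> + rho2 x * \<bar>g x\<bar>"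
      using rho2_ge_1[of x] by (simp add: distrib_left[symmetric] mult_left_mono)
    then show "ennreal (rho2 x * \<bar>f x + g x\<bar>) \<le> ennreal (rho2 x * \<bar>f x\<bar>) + ennreal (rho2 x * \<bar>g x\<bar>)"
      using rho2_ge_1[of x] by (simp add: ennreal_plus[symmetric] ennreal_leI del: ennreal_plus)
  qed
  also have "\<dots> = L1_2_norm f + L1_2_norm g"
    unfolding L1_2_norm_eq by (rule nn_integral_add) auto
  finally show ?thesis .
qed

lemma in_L1_2_add: "in_L1_2 f \<Longrightarrow> in_L1_2 g \<Longrightarrow> in_L1_2 (\<lambda>x. f x + g x)"
  using L1_2_norm_add_le[of f g] unfolding in_L1_2_def
  by (auto simp: less_top dest: order.trans[of _ _ top] intro: le_less_trans)

lemma in_L1_2_uminus: "in_L1_2 f \<Longrightarrow> in_L1_2 (\<lambda>x. - f x)"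
  by (simp add: in_L1_2_def L1_2_norm_def)

lemma in_L1_2_diff: "in_L1_2 f \<Longrightarrow> in_L1_2 g \<Longrightarrow> in_L1_2 (\<lambda>x. f x - g x)"
  using in_L1_2_add[of f "\<lambda>x. - g x"] in_L1_2_uminus[of g] by simp

lemma mean_zero_pos_neg_part_mass:
  assumes f: "in_L1_2 f" and mean_zero: "integral\<^sup>L lebesgue f = 0"
  obtains m where "0 \<le> m" "(\<integral>\<^sup>+x. pos_part f x \<partial>lebesgue) = ennreal m"
    "(\<integral>\<^sup>+x. neg_part f x \<partial>lebesgue) = ennreal m" "L1_norm f = ennreal (2 * m)"
proof
  have [measurable]: "f \<in> borel_measurable lebesgue" using f in_L1_2_def by auto
  define m where "m = enn2real (\<integral>\<^sup>+x. pos_part f x \<partial>lebesgue)"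
  have fin: "(\<integral>\<^sup>+x. pos_part f x \<partial>lebesgue) < \<infinity>" "(\<integral>\<^sup>+x. neg_part f x \<partial>lebesgue) < \<infinity>"
    using in_L1_2_L1_norm_finite[OF f] L1_norm_pos_neg_part[of f] by (auto simp: top_unique)
  have "enn2real (\<integral>\<^sup>+x. neg_part f x \<partial>lebesgue) = m"
    using integral_pos_neg_part[OF in_L1_2_integrable[OF f]] mean_zero by (simp add: m_def)
  then show parts: "(\<integral>\<^sup>+x. pos_part f x \<partial>lebesgue) = ennreal m" "(\<integral>\<^sup>+x. neg_part f x \<partial>lebesgue) = ennreal m"
    using fin ennreal_enn2real[of "\<integral>\<^sup>+x. neg_part f x \<partial>lebesgue"] unfolding m_def
    by (simp_all add: less_top[symmetric])
  show m0: "0 \<le> m" by (simp add: m_def)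
  show "L1_norm f = ennreal (2 * m)"
    using L1_norm_pos_neg_part[of f] parts m0 by (simp add: ennreal_plus[symmetric] del: ennreal_plus)
qed

definition in_V_L1_2 :: "(real^'d \<Rightarrow> real) \<Rightarrow> bool" where
  "in_V_L1_2 f \<longleftrightarrow> in_L1_2 f \<and> integral\<^sup>L lebesgue f = 0"

lemma in_V_L1_2_add: "in_V_L1_2 f \<Longrightarrow> in_V_L1_2 g \<Longrightarrow> in_V_L1_2 (\<lambda>x. f x + g x)"
  using in_L1_2_add[of f g] in_L1_2_integrable[of f] in_L1_2_integrable[of g]
  unfolding in_V_L1_2_def by simp

lemma in_V_L1_2_diff: "in_V_L1_2 f \<Longrightarrow> in_V_L1_2 g \<Longrightarrow> in_V_L1_2 (\<lambda>x. f x - g x)"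
  using in_L1_2_diff[of f g] in_L1_2_integrable[of f] in_L1_2_integrable[of g]
  unfolding in_V_L1_2_def by simp

section \<open>The local square-integrable part of the strong norm\<close>

definition sq_integral_on :: "(real^'d) set \<Rightarrow> (real^'d \<Rightarrow> real) \<Rightarrow> ennreal" where
  "sq_integral_on D f = (\<integral>\<^sup>+x. ennreal (indicator D x * (f x)\<^sup>2) \<partial>lebesgue)"

lemma L2_on_norm_eq:
  "L2_on_norm D f = (if sq_integral_on D f = \<infinity> then \<infinity> else ennreal (sqrt (enn2real (sq_integral_on D f))))"
  unfolding L2_on_norm_def sq_integral_on_def Let_def ..

lemma L2_on_norm_finite_iff: "L2_on_norm D f < \<infinity> \<longleftrightarrow> sq_integral_on D f < \<infinity>"
  unfolding L2_on_norm_eq by (auto simp: less_top)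

lemma L2_on_norm_cong:
  assumes "AE x in lebesgue. f x = g x" shows "L2_on_norm D f = L2_on_norm D g"
proof -
  have "sq_integral_on D f = sq_integral_on D g"
    unfolding sq_integral_on_def using assms by (intro nn_integral_cong_AE) auto
  then show ?thesis unfolding L2_on_norm_eq by simp
qed

context
  fixes D :: "(real^'d) set"
  assumes D_sets[measurable]: "D \<in> sets lebesgue"
begin

lemma sq_integral_on_add_le:
  assumes [measurable]: "f \<in> borel_measurable lebesgue" "g \<in> borel_measurable lebesgue"
  shows "sq_integral_on D (\<lambda>x. f x + g x) \<le> 2 * sq_integral_on D f + 2 * sq_integral_on D g"
proof -
  have "sq_integral_on D (\<lambda>x. f x + g x)
      \<le> (\<integral>\<^sup>+x. ennreal (2 * (indicator D x * (f x)\<^sup>2)) + ennreal (2 * (indicator D x * (g x)\<^sup>2)) \<partial>lebesgue)"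
    unfolding sq_integral_on_def
  proof (intro nn_integral_mono)
    fix x
    have "(f x + g x)\<^sup>2 \<le> 2 * (f x)\<^sup>2 + 2 * (g x)\<^sup>2"
      using sum_squares_bound[of "f x" "g x"] by (simp add: power2_eq_square algebra_simps)
    then have "indicator D x * (f x + g x)\<^sup>2 \<le> 2 * (indicator D x * (f x)\<^sup>2) + 2 * (indicator D x * (g x)\<^sup>2)"
      by (auto simp: indicator_def)
    then show "ennreal (indicator D x * (f x + g x)\<^sup>2)
        \<le> ennreal (2 * (indicator D x * (f x)\<^sup>2)) + ennreal (2 * (indicator D x * (g x)\<^sup>2))"
      by (simp add: ennreal_plus[symmetric] ennreal_leI del: ennreal_plus)
  qed
  also have "\<dots> = 2 * sq_integral_on D f + 2 * sq_integral_on D g"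
    unfolding sq_integral_on_def by (subst nn_integral_add) (auto simp: ennreal_mult nn_integral_cmult)
  finally show ?thesis .
qed

lemma L2_on_norm_diff_finite:
  assumes [measurable]: "f \<in> borel_measurable lebesgue" "g \<in> borel_measurable lebesgue"
    and "L2_on_norm D f < \<infinity>" "L2_on_norm D g < \<infinity>"
  shows "L2_on_norm D (\<lambda>x. f x - g x) < \<infinity>"
proof -
  have "sq_integral_on D (\<lambda>x. f x + - g x) \<le> 2 * sq_integral_on D f + 2 * sq_integral_on D (\<lambda>x. - g x)"
    by (rule sq_integral_on_add_le) simp_all
  also have "\<dots> < \<infinity>"
    using assms(3,4) unfolding L2_on_norm_finite_iff sq_integral_on_def by (simp add: ennreal_mult_less_top)
  finally show ?thesis unfolding L2_on_norm_finite_iff by simp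
qed

context
  assumes D_finite: "emeasure lebesgue D < \<infinity>"
begin

lemma sq_integral_on_le_bound:
  assumes [measurable]: "h \<in> borel_measurable lebesgue" and bound: "\<And>x. \<bar>h x\<bar> \<le> c"
  shows "sq_integral_on D h \<le> ennreal (c\<^sup>2 * measure lebesgue D)"
proof -
  have "sq_integral_on D h \<le> (\<integral>\<^sup>+x. ennreal (c\<^sup>2) * indicator D x \<partial>lebesgue)"
    unfolding sq_integral_on_def
  proof (intro nn_integral_mono)
    fix x
    have "\<bar>h x\<bar>\<^sup>2 \<le> c\<^sup>2" using bound[of x] by (intro power_mono) auto
    then show "ennreal (indicator D x * (h x)\<^sup>2) \<le> ennreal (c\<^sup>2) * indicator D x"
      by (auto simp: indicator_def intro!: ennreal_leI)
  qed
  also have "\<dots> = ennreal (c\<^sup>2 * measure lebesgue D)"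
    using D_finite by (simp add: nn_integral_cmult_indicator emeasure_eq_ennreal_measure less_top ennreal_mult)
  finally show ?thesis .
qed

lemma L2_on_norm_le_bound:
  assumes [measurable]: "h \<in> borel_measurable lebesgue" and "\<And>x. \<bar>h x\<bar> \<le> c"
  shows "L2_on_norm D h \<le> ennreal (c * sqrt (measure lebesgue D))"
proof -
  have c: "0 \<le> c" using assms(2)[of 0] by linarith
  have I: "sq_integral_on D h \<le> ennreal (c\<^sup>2 * measure lebesgue D)"
    by (rule sq_integral_on_le_bound) fact+
  then have "sq_integral_on D h \<noteq> \<infinity>"
    using ennreal_less_top le_less_trans by (metis infinity_ennreal_def less_irrefl)
  moreover have "sqrt (enn2real (sq_integral_on D h)) \<le> sqrt (c\<^sup>2 * measure lebesgue D)"
    using enn2real_mono[OF I] by simp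
  moreover have "sqrt (c\<^sup>2 * measure lebesgue D) = c * sqrt (measure lebesgue D)"
    using c by (simp add: real_sqrt_mult)
  ultimately show ?thesis unfolding L2_on_norm_eq by (simp add: ennreal_leI)
qed

lemma L2_on_norm_add_bounded_le:
  assumes [measurable]: "f \<in> borel_measurable lebesgue" "h \<in> borel_measurable lebesgue"
    and "L2_on_norm D f < \<infinity>" and bound: "\<And>x. \<bar>h x\<bar> \<le> c"
  shows "L2_on_norm D (\<lambda>x. f x + h x)
    \<le> ennreal (sqrt 2) * L2_on_norm D f + ennreal (sqrt 2 * c * sqrt (measure lebesgue D))"
proof -
  have c: "0 \<le> c" using bound[of 0] by linarith
  define a where "a = enn2real (sq_integral_on D f)"
  have a: "sq_integral_on D f = ennreal a" "0 \<le> a"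
    using assms(3) unfolding L2_on_norm_finite_iff a_def by (simp_all add: less_top)
  have "sq_integral_on D (\<lambda>x. f x + h x) \<le> 2 * ennreal a + 2 * ennreal (c\<^sup>2 * measure lebesgue D)"
    using order_trans[OF sq_integral_on_add_le[of f h]
        add_left_mono[OF mult_left_mono[OF sq_integral_on_le_bound[OF assms(2) bound]]]] a
    by simp
  also have "\<dots> = ennreal (2 * a + 2 * (c\<^sup>2 * measure lebesgue D))"
    using a by (subst ennreal_plus) (simp_all add: ennreal_mult)
  finally have I: "sq_integral_on D (\<lambda>x. f x + h x) \<le> ennreal (2 * a + 2 * (c\<^sup>2 * measure lebesgue D))" .
  then have fin: "sq_integral_on D (\<lambda>x. f x + h x) \<noteq> \<infinity>"
    using ennreal_less_top le_less_trans by (metis infinity_ennreal_def less_irrefl)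
  have "sqrt (enn2real (sq_integral_on D (\<lambda>x. f x + h x))) \<le> sqrt (2 * a + 2 * (c\<^sup>2 * measure lebesgue D))"
    using enn2real_mono[OF I] a by (simp del: ennreal_plus)
  also have "\<dots> \<le> sqrt (2 * a) + sqrt (2 * (c\<^sup>2 * measure lebesgue D))"
    using a by (intro sqrt_add_le_add_sqrt) auto
  also have "\<dots> = sqrt 2 * sqrt a + sqrt 2 * c * sqrt (measure lebesgue D)"
    using c by (simp add: real_sqrt_mult)
  finally have "L2_on_norm D (\<lambda>x. f x + h x) \<le> ennreal (sqrt 2 * sqrt a + sqrt 2 * c * sqrt (measure lebesgue D))"
    unfolding L2_on_norm_eq using fin by (simp add: ennreal_leI)
  also have "\<dots> = ennreal (sqrt 2) * L2_on_norm D f + ennreal (sqrt 2 * c * sqrt (measure lebesgue D))"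
    unfolding L2_on_norm_eq a using a c by (simp add: ennreal_mult)
  finally show ?thesis .
qed

end

end

lemma V_B_iff: "f \<in> V_B D \<longleftrightarrow> in_V_L1_2 f \<and> L2_on_norm D f < \<infinity>"
  unfolding V_B_def strong_space_def strong_norm_def in_V_L1_2_def in_L1_2_def
  by (auto simp: less_top)

lemma strong_norm_cong: "AE x in lebesgue. f x = g x \<Longrightarrow> strong_norm D f = strong_norm D g"
  unfolding strong_norm_def using L1_2_norm_cong L2_on_norm_cong by metis

lemma V_B_diff:
  assumes "D \<in> sets lebesgue" "f \<in> V_B D" "g \<in> V_B D" shows "(\<lambda>x. f x - g x) \<in> V_B D"
proof -
  have "in_V_L1_2 f" "in_V_L1_2 g" "L2_on_norm D f < \<infinity>" "L2_on_norm D g < \<infinity>"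
    using assms by (auto simp: V_B_iff)
  moreover from this have "f \<in> borel_measurable lebesgue" "g \<in> borel_measurable lebesgue"
    by (auto simp: in_V_L1_2_def in_L1_2_def)
  ultimately show ?thesis
    using in_V_L1_2_diff L2_on_norm_diff_finite[OF assms(1)] by (simp add: V_B_iff)
qed

section \<open>Transfer operators of bounded kernels\<close>

lemma ennreal_abs_diff_add_le:
  assumes "P < \<infinity>" "Q < \<infinity>" "t \<le> P" "t \<le> Q"
  shows "ennreal \<bar>enn2real P - enn2real Q\<bar> + 2 * t \<le> P + Q"
proof -
  have "t < \<infinity>" using le_less_trans[OF assms(3,1)] .
  then obtain p q s where pqs: "P = ennreal p" "Q = ennreal q" "t = ennreal s" "0 \<le> p" "0 \<le> q" "0 \<le> s"
    using assms(1,2) by (metis ennreal_cases infinity_ennreal_def less_irrefl)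
  then have "s \<le> p" "s \<le> q" using assms(3,4) by auto
  then have "\<bar>p - q\<bar> + 2 * s \<le> p + q" by arith
  then have "ennreal (\<bar>p - q\<bar> + 2 * s) \<le> ennreal (p + q)" by (rule ennreal_leI)
  then show ?thesis using pqs by (simp add: ennreal_mult)
qed

locale bounded_kernel =
  fixes \<kappa> :: "real^'d \<Rightarrow> real^'d \<Rightarrow> real" and C0 :: real
  assumes kernel_measurable[measurable]:
      "(\<lambda>p. \<kappa> (fst p) (snd p)) \<in> borel_measurable (lebesgue \<Otimes>\<^sub>M lebesgue)"
    and kernel_nonneg: "\<And>x y. 0 \<le> \<kappa> x y"
    and kernel_bounded: "\<And>x y. \<kappa> x y \<le> C0"
begin

lemma kernel_measurable_fst[measurable]: "(\<lambda>x. \<kappa> x y) \<in> borel_measurable lebesgue"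
  using measurable_compose[of "\<lambda>x. (x, y)" lebesgue "lebesgue \<Otimes>\<^sub>M lebesgue", OF _ kernel_measurable]
  by simp

lemma kernel_measurable_snd[measurable]: "(\<lambda>y. \<kappa> x y) \<in> borel_measurable lebesgue"
  using measurable_compose[of "\<lambda>y. (x, y)" lebesgue "lebesgue \<Otimes>\<^sub>M lebesgue", OF _ kernel_measurable]
  by simp

lemma kernel_measurable_swap[measurable]:
  "(\<lambda>p. \<kappa> (snd p) (fst p)) \<in> borel_measurable (lebesgue \<Otimes>\<^sub>M lebesgue)"
  using measurable_comp[OF measurable_pair_swap' kernel_measurable]
  by (simp add: o_def case_prod_beta)

lemma C0_nonneg: "0 \<le> C0"
  using kernel_nonneg[of 0 0] kernel_bounded[of 0 0] by linarith

definition transfer_nn :: "(real^'d \<Rightarrow> real) \<Rightarrow> real^'d \<Rightarrow> ennreal" where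
  "transfer_nn h y = (\<integral>\<^sup>+x. ennreal (\<kappa> x y * h x) \<partial>lebesgue)"

lemma transfer_nn_measurable[measurable]:
  assumes [measurable]: "h \<in> borel_measurable lebesgue"
  shows "transfer_nn h \<in> borel_measurable lebesgue"
  unfolding transfer_nn_def by (rule leb.borel_measurable_nn_integral) measurable

lemma nn_integral_kernel_mult_le:
  assumes [measurable]: "f \<in> borel_measurable lebesgue"
  shows "(\<integral>\<^sup>+x. ennreal (\<kappa> x y * \<bar>f x\<bar>) \<partial>lebesgue) \<le> ennreal C0 * L1_norm f"
proof -
  have "(\<integral>\<^sup>+x. ennreal (\<kappa> x y * \<bar>f x\<bar>) \<partial>lebesgue) \<le> (\<integral>\<^sup>+x. ennreal (C0 * \<bar>f x\<bar>) \<partial>lebesgue)"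
    using kernel_nonneg kernel_bounded by (intro nn_integral_mono ennreal_leI mult_right_mono) auto
  also have "\<dots> = ennreal C0 * L1_norm f"
    unfolding L1_norm_def using C0_nonneg by (simp add: ennreal_mult nn_integral_cmult)
  finally show ?thesis .
qed

lemma transfer_nn_finite:
  assumes "in_L1_2 f" "\<And>x. 0 \<le> h x" "\<And>x. h x \<le> \<bar>f x\<bar>"
  shows "transfer_nn h y < \<infinity>"
proof -
  have [measurable]: "f \<in> borel_measurable lebesgue" using assms in_L1_2_def by auto
  have "transfer_nn h y \<le> (\<integral>\<^sup>+x. ennreal (\<kappa> x y * \<bar>f x\<bar>) \<partial>lebesgue)"
    unfolding transfer_nn_def using assms kernel_nonneg
    by (intro nn_integral_mono ennreal_leI mult_left_mono) auto
  also have "\<dots> \<le> ennreal C0 * L1_norm f" by (rule nn_integral_kernel_mult_le) simp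
  also have "\<dots> < \<infinity>" using in_L1_2_L1_norm_finite[OF assms(1)] by (simp add: ennreal_mult_less_top)
  finally show ?thesis .
qed

lemma integrable_kernel_mult:
  assumes [measurable]: "f \<in> borel_measurable lebesgue" and "L1_norm f < \<infinity>"
  shows "integrable lebesgue (\<lambda>x. \<kappa> x y * f x)"
proof (rule integrableI_bounded)
  show "(\<lambda>x. \<kappa> x y * f x) \<in> borel_measurable lebesgue" by measurable
  have "(\<integral>\<^sup>+x. ennreal (norm (\<kappa> x y * f x)) \<partial>lebesgue) \<le> ennreal C0 * L1_norm f"
    using nn_integral_kernel_mult_le[of f y] kernel_nonneg by (simp add: abs_mult)
  also have "\<dots> < \<infinity>" using assms(2) by (simp add: ennreal_mult_less_top)
  finally show "(\<integral>\<^sup>+x. ennreal (norm (\<kappa> x y * f x)) \<partial>lebesgue) < \<infinity>" .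
qed

lemma in_L1_2_integrable_kernel_mult:
  "in_L1_2 f \<Longrightarrow> integrable lebesgue (\<lambda>x. \<kappa> x y * f x)"
  using integrable_kernel_mult in_L1_2_L1_norm_finite in_L1_2_def by blast

lemma transfer_pos_neg_part:
  assumes "in_L1_2 f"
  shows "transfer \<kappa> f y = enn2real (transfer_nn (pos_part f) y) - enn2real (transfer_nn (neg_part f) y)"
proof -
  have [measurable]: "f \<in> borel_measurable lebesgue" using assms in_L1_2_def by auto
  have "L1_norm (pos_part f) \<le> L1_norm f" "L1_norm (neg_part f) \<le> L1_norm f"
    unfolding L1_norm_def by (auto intro!: nn_integral_mono ennreal_leI simp: pos_part_def neg_part_def)
  then have int: "integrable lebesgue (\<lambda>x. \<kappa> x y * pos_part f x)"
    "integrable lebesgue (\<lambda>x. \<kappa> x y * neg_part f x)"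
    using in_L1_2_L1_norm_finite[OF assms] by (auto intro!: integrable_kernel_mult)
  have "transfer \<kappa> f y = (\<integral>x. \<kappa> x y * pos_part f x - \<kappa> x y * neg_part f x \<partial>lebesgue)"
    unfolding transfer_def
    by (intro Bochner_Integration.integral_cong) (auto simp: pos_neg_part_diff[of f] algebra_simps)
  also have "\<dots> = (\<integral>x. \<kappa> x y * pos_part f x \<partial>lebesgue) - (\<integral>x. \<kappa> x y * neg_part f x \<partial>lebesgue)"
    using int by (rule Bochner_Integration.integral_diff)
  also have "\<dots> = enn2real (transfer_nn (pos_part f) y) - enn2real (transfer_nn (neg_part f) y)"
    unfolding transfer_nn_def using kernel_nonneg pos_part_nonneg neg_part_nonneg
    by (subst (1 2) integral_eq_nn_integral) (auto intro!: always_eventually mult_nonneg_nonneg)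
  finally show ?thesis .
qed

lemma transfer_measurable:
  assumes "in_L1_2 f" shows "transfer \<kappa> f \<in> borel_measurable lebesgue"
proof -
  have [measurable]: "f \<in> borel_measurable lebesgue" using assms in_L1_2_def by auto
  have "transfer \<kappa> f = (\<lambda>y. enn2real (transfer_nn (pos_part f) y) - enn2real (transfer_nn (neg_part f) y))"
    using transfer_pos_neg_part[OF assms] by auto
  then show ?thesis by simp
qed

lemma transfer_nn_tonelli:
  assumes [measurable]: "h \<in> borel_measurable lebesgue" "w \<in> borel_measurable lebesgue"
    and "\<And>x. 0 \<le> h x" "\<And>y. 0 \<le> w y"
  shows "(\<integral>\<^sup>+y. ennreal (w y) * transfer_nn h y \<partial>lebesgue)
       = (\<integral>\<^sup>+x. ennreal (h x) * (\<integral>\<^sup>+y. ennreal (w y * \<kappa> x y) \<partial>lebesgue) \<partial>lebesgue)"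
proof -
  have "(\<integral>\<^sup>+y. ennreal (w y) * transfer_nn h y \<partial>lebesgue)
      = (\<integral>\<^sup>+y. (\<integral>\<^sup>+x. ennreal (w y * \<kappa> x y * h x) \<partial>lebesgue) \<partial>lebesgue)"
    unfolding transfer_nn_def
    by (intro nn_integral_cong, subst nn_integral_cmult[symmetric])
       (auto simp: ennreal_mult'[symmetric] assms mult.assoc intro!: nn_integral_cong)
  also have "\<dots> = (\<integral>\<^sup>+x. (\<integral>\<^sup>+y. ennreal (w y * \<kappa> x y * h x) \<partial>lebesgue) \<partial>lebesgue)"
    by (rule leb2.Fubini') (simp add: case_prod_beta, measurable)
  also have "\<dots> = (\<integral>\<^sup>+x. ennreal (h x) * (\<integral>\<^sup>+y. ennreal (w y * \<kappa> x y) \<partial>lebesgue) \<partial>lebesgue)"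
    by (intro nn_integral_cong, subst nn_integral_cmult[symmetric])
       (auto simp: ennreal_mult'[symmetric] assms mult.commute mult.left_commute intro!: nn_integral_cong)
  finally show ?thesis .
qed

lemma transfer_diff:
  assumes "in_L1_2 f" "in_L1_2 g"
  shows "transfer \<kappa> (\<lambda>x. f x - g x) y = transfer \<kappa> f y - transfer \<kappa> g y"
  using Bochner_Integration.integral_diff[OF assms[THEN in_L1_2_integrable_kernel_mult]]
  by (simp add: transfer_def right_diff_distrib)

lemma transfer_cong_AE:
  assumes [measurable]: "f \<in> borel_measurable lebesgue" "g \<in> borel_measurable lebesgue"
    and "AE x in lebesgue. f x = g x"
  shows "transfer \<kappa> f y = transfer \<kappa> g y"
  unfolding transfer_def using assms(3) by (intro integral_cong_AE) auto

lemma abs_transfer_le: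
  assumes "in_L1_2 f" shows "\<bar>transfer \<kappa> f y\<bar> \<le> C0 * enn2real (L1_2_norm f)"
proof -
  have "\<bar>transfer \<kappa> f y\<bar> \<le> (\<integral>x. C0 * \<bar>f x\<bar> \<partial>lebesgue)"
    unfolding transfer_def
    by (rule integral_abs_bound_integral[OF in_L1_2_integrable_kernel_mult[OF assms]])
       (use in_L1_2_integrable[OF assms] kernel_nonneg kernel_bounded in
         \<open>auto simp: abs_mult intro!: mult_right_mono\<close>)
  also have "\<dots> \<le> C0 * enn2real (L1_2_norm f)"
    using integral_abs_le_L1_2_norm[OF assms] C0_nonneg by (simp add: mult_left_mono)
  finally show ?thesis .
qed

end

section \<open>Harris contraction\<close>

locale harris_kernel = bounded_kernel \<kappa> C0 for \<kappa> :: "real^'d \<Rightarrow> real^'d \<Rightarrow> real" and C0 +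
  fixes \<gamma> K \<epsilon> R :: real and B :: "(real^'d) set"
  assumes kernel_mass: "\<And>x. (\<integral>\<^sup>+y. ennreal (\<kappa> x y) \<partial>lebesgue) = 1"
    and drift: "\<And>x. (\<integral>\<^sup>+y. ennreal (rho2 y * \<kappa> x y) \<partial>lebesgue) \<le> ennreal (\<gamma> * rho2 x + K)"
    and minorization: "\<And>x y. rho2 x \<le> R \<Longrightarrow> y \<in> B \<Longrightarrow> \<epsilon> \<le> \<kappa> x y"
    and gamma: "0 \<le> \<gamma>" "\<gamma> < 1" and K_pos: "0 < K" and eps_pos: "0 < \<epsilon>"
    and R_large: "8 * K / (1 - \<gamma>) \<le> R"
    and B_sets[measurable]: "B \<in> sets lebesgue"
    and B_finite: "emeasure lebesgue B < \<infinity>" and B_pos: "0 < measure lebesgue B"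
begin

text \<open>
  The constants follow Hairer and Mattingly's proof of Harris' theorem: \<open>\<beta>\<close> weighs the
  Lyapunov part of \<open>harris_norm\<close>, and \<open>\<alpha> < 1\<close> is the resulting contraction rate.
\<close>

definition "vB = measure lebesgue B"
definition "\<beta> = min 1 (\<epsilon> * vB / (4 * K))"
definition "\<gamma>0 = (1 + \<gamma>) / 2"
definition "\<delta> = \<beta> * (1 - \<gamma>0) / (4 / R + \<beta>)"
definition "\<alpha> = max (max (1 - \<epsilon> * vB / 4) \<gamma>) (1 - \<delta>)"

definition harris_norm :: "(real^'d \<Rightarrow> real) \<Rightarrow> ennreal" where
  "harris_norm f = L1_norm f + ennreal \<beta> * L1_2_norm f"

definition sublevel_mass :: "(real^'d \<Rightarrow> real) \<Rightarrow> ennreal" where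
  "sublevel_mass h = (\<integral>\<^sup>+x. ennreal (if rho2 x \<le> R then h x else 0) \<partial>lebesgue)"

lemma vB_pos: "0 < vB"
  using B_pos by (simp add: vB_def)

lemma R_pos: "0 < R"
proof -
  have "0 < 8 * K / (1 - \<gamma>)" using K_pos gamma by simp
  then show ?thesis using R_large by linarith
qed

lemma beta_pos: "0 < \<beta>" and beta_le_1: "\<beta> \<le> 1" and beta_K: "\<beta> * K \<le> \<epsilon> * vB / 4"
  using vB_pos eps_pos K_pos by (auto simp: \<beta>_def min_def field_simps)

lemma delta_pos: "0 < \<delta>"
  unfolding \<delta>_def \<gamma>0_def using beta_pos R_pos gamma by (auto intro!: divide_pos_pos add_pos_pos)

lemma delta_eq: "\<delta> * (4 / R + \<beta>) = \<beta> * (1 - \<gamma>0)"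
proof -
  have "0 < 4 / R + \<beta>" using beta_pos R_pos by (simp add: add_pos_pos)
  then show ?thesis unfolding \<delta>_def by simp
qed

lemma alpha_lt_1: "\<alpha> < 1" and alpha_nonneg: "0 \<le> \<alpha>"
  unfolding \<alpha>_def using vB_pos eps_pos gamma delta_pos by auto

lemma K_div_R: "4 * K / R \<le> (1 - \<gamma>) / 2"
proof -
  have "8 * K \<le> R * (1 - \<gamma>)" using R_large gamma by (simp add: field_simps)
  then show ?thesis using R_pos by (simp add: field_simps)
qed

text \<open>
  If the mass of \<open>f\<close> is not dominated by its \<open>rho2\<close>-weighted mass, most of it lies in the
  sublevel set \<open>rho2 \<le> R\<close>, where the minorization couples the positive and negative parts;
  otherwise the drift alone contracts the weighted part.
\<close>
lemma contraction_arith: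
  assumes "I + 2 * \<epsilon> * min a b * vB \<le> (1 + \<beta> * K) * (2 * m) + \<beta> * \<gamma> * nv"
    and ma: "m \<le> a + nv / R" and mb: "m \<le> b + nv / R" and "0 \<le> a" "0 \<le> b" "0 \<le> m" "0 \<le> nv"
  shows "I \<le> \<alpha> * (2 * m + \<beta> * nv)"
proof -
  define n1 c where "n1 = 2 * m" and "c = min a b"
  note H = assms(1)[folded n1_def c_def]
  have "I \<le> \<alpha> * (n1 + \<beta> * nv)"
  proof (cases "nv \<le> R * m / 2")
    case True
    then have "nv / R \<le> m / 2" using R_pos by (simp add: field_simps)
    then have "m / 2 \<le> c" using ma mb c_def by linarith
    then have "\<epsilon> * vB * m \<le> 2*\<epsilon>*c * vB"
      using mult_left_mono[of "m/2" c "\<epsilon> * vB"] eps_pos vB_pos by (simp add: algebra_simps)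
    moreover have "2*(\<beta>*K)*m \<le> 2*(\<epsilon> * vB/4)*m" using beta_K assms by (intro mult_right_mono) auto
    ultimately have "I \<le> (1 - \<epsilon> * vB/4) * n1 + \<gamma> * (\<beta> * nv)" using H by (simp add: n1_def algebra_simps)
    also have "\<dots> \<le> \<alpha> * n1 + \<alpha> * (\<beta> * nv)"
      using assms beta_pos by (intro add_mono mult_right_mono) (auto simp: \<alpha>_def n1_def)
    finally show ?thesis by (simp add: algebra_simps)
  next
    case False
    then have n1_le: "n1 \<le> 4 * nv / R" using R_pos by (simp add: n1_def field_simps)
    have "0 \<le> 2*\<epsilon>*c * vB" using eps_pos vB_pos assms c_def by simp
    then have H2: "I \<le> n1 + (\<beta>*K)*n1 + \<beta>*\<gamma> * nv" using H by (simp add: algebra_simps)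
    have "(\<beta>*K)*n1 \<le> (\<beta>*K)*(4 * nv/R)" using n1_le beta_pos K_pos by (intro mult_left_mono) auto
    also have "\<dots> = \<beta> * nv * (4*K/R)" by (simp add: algebra_simps)
    also have "\<dots> \<le> \<beta> * nv * ((1-\<gamma>)/2)" using K_div_R beta_pos assms by (intro mult_left_mono) auto
    finally have "I \<le> n1 + \<beta>*\<gamma>0 * nv" using H2 by (simp add: \<gamma>0_def field_simps)
    also have "\<dots> \<le> (1 - \<delta>) * (n1 + \<beta> * nv)"
    proof -
      have "\<delta> * n1 \<le> \<delta> * (4 * nv / R)" using n1_le delta_pos by (intro mult_left_mono) auto
      also have "\<dots> = nv * (\<delta> * (4 / R + \<beta>)) - \<delta> * \<beta> * nv" by (simp add: algebra_simps)
      also have "\<dots> = nv * (\<beta> * (1 - \<gamma>0)) - \<delta> * \<beta> * nv" by (simp add: delta_eq)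
      finally show ?thesis by (simp add: algebra_simps)
    qed
    also have "\<dots> \<le> \<alpha> * (n1 + \<beta> * nv)"
      using assms beta_pos by (intro mult_right_mono) (auto simp: \<alpha>_def n1_def)
    finally show ?thesis .
  qed
  then show ?thesis by (simp add: n1_def)
qed

definition harris_weight :: "real^'d \<Rightarrow> real" where
  "harris_weight y = 1 + \<beta> * rho2 y"

lemma harris_weight_ge_1: "1 \<le> harris_weight y"
  using beta_pos rho2_ge_1[of y] by (simp add: harris_weight_def)

lemma harris_weight_nonneg: "0 \<le> harris_weight y"
  using harris_weight_ge_1[of y] by simp

lemma harris_weight_measurable[measurable]: "harris_weight \<in> borel_measurable lebesgue"
  unfolding harris_weight_def by measurable

lemma harris_norm_eq:
  assumes [measurable]: "f \<in> borel_measurable lebesgue"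
  shows "harris_norm f = (\<integral>\<^sup>+y. ennreal (harris_weight y * \<bar>f y\<bar>) \<partial>lebesgue)"
proof -
  have "harris_norm f = (\<integral>\<^sup>+y. ennreal \<bar>f y\<bar> + ennreal \<beta> * ennreal (rho2 y * \<bar>f y\<bar>) \<partial>lebesgue)"
    unfolding harris_norm_def L1_norm_def L1_2_norm_eq
    by (subst nn_integral_add) (auto simp: nn_integral_cmult)
  also have "\<dots> = (\<integral>\<^sup>+y. ennreal (harris_weight y * \<bar>f y\<bar>) \<partial>lebesgue)"
  proof (intro nn_integral_cong)
    fix y
    have "harris_weight y * \<bar>f y\<bar> = \<bar>f y\<bar> + \<beta> * (rho2 y * \<bar>f y\<bar>)"
      by (simp add: harris_weight_def algebra_simps)
    then show "ennreal \<bar>f y\<bar> + ennreal \<beta> * ennreal (rho2 y * \<bar>f y\<bar>) = ennreal (harris_weight y * \<bar>f y\<bar>)"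
      using beta_pos rho2_ge_1[of y] by (simp add: ennreal_mult)
  qed
  finally show ?thesis .
qed

lemma weighted_kernel_mass:
  "(\<integral>\<^sup>+y. ennreal (harris_weight y * \<kappa> x y) \<partial>lebesgue) \<le> ennreal (1 + \<beta> * (\<gamma> * rho2 x + K))"
proof -
  have "(\<integral>\<^sup>+y. ennreal (harris_weight y * \<kappa> x y) \<partial>lebesgue)
      = (\<integral>\<^sup>+y. ennreal (\<kappa> x y) + ennreal \<beta> * ennreal (rho2 y * \<kappa> x y) \<partial>lebesgue)"
  proof (intro nn_integral_cong)
    fix y
    have "harris_weight y * \<kappa> x y = \<kappa> x y + \<beta> * (rho2 y * \<kappa> x y)"
      by (simp add: harris_weight_def algebra_simps)
    then show "ennreal (harris_weight y * \<kappa> x y) = ennreal (\<kappa> x y) + ennreal \<beta> * ennreal (rho2 y * \<kappa> x y)"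
      using beta_pos rho2_ge_1[of y] kernel_nonneg[of x y] by (simp add: ennreal_mult)
  qed
  also have "\<dots> = 1 + ennreal \<beta> * (\<integral>\<^sup>+y. ennreal (rho2 y * \<kappa> x y) \<partial>lebesgue)"
    by (subst nn_integral_add) (auto simp: kernel_mass nn_integral_cmult)
  also have "\<dots> \<le> 1 + ennreal \<beta> * ennreal (\<gamma> * rho2 x + K)"
    by (intro add_mono mult_left_mono drift) auto
  also have "\<dots> = ennreal (1 + \<beta> * (\<gamma> * rho2 x + K))"
  proof -
    have "0 \<le> \<beta> * (\<gamma> * rho2 x + K)" using beta_pos gamma K_pos rho2_ge_1[of x] by simp
    then show ?thesis using beta_pos by (simp add: ennreal_mult'[symmetric])
  qed
  finally show ?thesis .
qed

lemma weighted_measure_B: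
  "ennreal vB \<le> (\<integral>\<^sup>+y. ennreal (harris_weight y * indicator B y) \<partial>lebesgue)"
proof -
  have "ennreal vB = (\<integral>\<^sup>+y. indicator B y \<partial>lebesgue)"
    using B_finite by (simp add: vB_def emeasure_eq_ennreal_measure less_top)
  also have "\<dots> \<le> (\<integral>\<^sup>+y. ennreal (harris_weight y * indicator B y) \<partial>lebesgue)"
    using harris_weight_ge_1 by (intro nn_integral_mono) (auto simp: indicator_def)
  finally show ?thesis .
qed

lemma weighted_transfer_nn_le:
  assumes [measurable]: "h \<in> borel_measurable lebesgue" and h: "\<And>x. 0 \<le> h x"
  shows "(\<integral>\<^sup>+y. ennreal (harris_weight y) * transfer_nn h y \<partial>lebesgue)
    \<le> (\<integral>\<^sup>+x. ennreal (h x * (1 + \<beta> * (\<gamma> * rho2 x + K))) \<partial>lebesgue)"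
proof (subst transfer_nn_tonelli, (use harris_weight_nonneg h in auto)[4], intro nn_integral_mono)
  fix x :: "real^'d"
  have "0 \<le> 1 + \<beta> * (\<gamma> * rho2 x + K)" using beta_pos gamma K_pos rho2_ge_1[of x] by simp
  then show "ennreal (h x) * (\<integral>\<^sup>+y. ennreal (harris_weight y * \<kappa> x y) \<partial>lebesgue)
      \<le> ennreal (h x * (1 + \<beta> * (\<gamma> * rho2 x + K)))"
    using h[of x] by (simp add: ennreal_mult mult_left_mono weighted_kernel_mass)
qed

lemma nn_integral_transfer_nn:
  assumes [measurable]: "h \<in> borel_measurable lebesgue" and "\<And>x. 0 \<le> h x"
  shows "(\<integral>\<^sup>+y. transfer_nn h y \<partial>lebesgue) = (\<integral>\<^sup>+x. ennreal (h x) \<partial>lebesgue)"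
  using transfer_nn_tonelli[of h "\<lambda>_. 1"] assms by (simp add: kernel_mass)

lemma transfer_nn_ge_minorization:
  assumes [measurable]: "h \<in> borel_measurable lebesgue" and h: "\<And>x. 0 \<le> h x"
  shows "ennreal (\<epsilon> * indicator B y) * sublevel_mass h \<le> transfer_nn h y"
proof -
  have "ennreal (\<epsilon> * indicator B y) * sublevel_mass h
      = (\<integral>\<^sup>+x. ennreal (\<epsilon> * indicator B y * (if rho2 x \<le> R then h x else 0)) \<partial>lebesgue)"
    unfolding sublevel_mass_def using eps_pos h
    by (subst nn_integral_cmult[symmetric]) (auto simp: ennreal_mult)
  also have "\<dots> \<le> transfer_nn h y"
    unfolding transfer_nn_def using minorization[of _ y] h kernel_nonneg eps_pos
    by (intro nn_integral_mono ennreal_leI) (auto simp: indicator_def intro!: mult_right_mono)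
  finally show ?thesis .
qed

lemma nn_integral_le_sublevel_mass:
  assumes [measurable]: "h \<in> borel_measurable lebesgue" "f \<in> borel_measurable lebesgue"
    and h: "\<And>x. 0 \<le> h x" "\<And>x. h x \<le> \<bar>f x\<bar>"
  shows "(\<integral>\<^sup>+x. ennreal (h x) \<partial>lebesgue) \<le> sublevel_mass h + ennreal (1 / R) * L1_2_norm f"
proof -
  have "(\<integral>\<^sup>+x. ennreal (h x) \<partial>lebesgue)
      = (\<integral>\<^sup>+x. ennreal (if rho2 x \<le> R then h x else 0) + ennreal (if rho2 x \<le> R then 0 else h x) \<partial>lebesgue)"
    by (intro nn_integral_cong) auto
  also have "\<dots> = sublevel_mass h + (\<integral>\<^sup>+x. ennreal (if rho2 x \<le> R then 0 else h x) \<partial>lebesgue)"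
    unfolding sublevel_mass_def by (subst nn_integral_add) auto
  also have "(\<integral>\<^sup>+x. ennreal (if rho2 x \<le> R then 0 else h x) \<partial>lebesgue)
      \<le> (\<integral>\<^sup>+x. ennreal (1 / R) * ennreal (rho2 x * \<bar>f x\<bar>) \<partial>lebesgue)"
  proof (intro nn_integral_mono)
    fix x
    have "(if rho2 x \<le> R then 0 else h x) \<le> 1 / R * (rho2 x * \<bar>f x\<bar>)"
    proof (cases "rho2 x \<le> R")
      case False
      then have "h x * R \<le> \<bar>f x\<bar> * rho2 x" using h[of x] R_pos by (intro mult_mono) auto
      then show ?thesis using False R_pos by (simp add: field_simps)
    qed (use R_pos rho2_ge_1[of x] in auto)
    then have "ennreal (if rho2 x \<le> R then 0 else h x) \<le> ennreal (1 / R * (rho2 x * \<bar>f x\<bar>))"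
      by (rule ennreal_leI)
    then show "ennreal (if rho2 x \<le> R then 0 else h x) \<le> ennreal (1 / R) * ennreal (rho2 x * \<bar>f x\<bar>)"
      using R_pos by (simp only: ennreal_mult'[of "1 / R"] divide_nonneg_nonneg zero_le_one less_imp_le)
  qed
  also have "\<dots> = ennreal (1 / R) * L1_2_norm f"
    unfolding L1_2_norm_eq by (rule nn_integral_cmult) measurable
  finally show ?thesis by (simp add: add_left_mono)
qed

lemma abs_transfer_coupling_le:
  assumes "in_L1_2 f"
  shows "ennreal \<bar>transfer \<kappa> f y\<bar>
      + 2 * (ennreal (\<epsilon> * indicator B y) * min (sublevel_mass (pos_part f)) (sublevel_mass (neg_part f)))
    \<le> transfer_nn (pos_part f) y + transfer_nn (neg_part f) y"
proof -
  define c where "c = min (sublevel_mass (pos_part f)) (sublevel_mass (neg_part f))"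
  have low: "ennreal (\<epsilon> * indicator B y) * c \<le> transfer_nn (pos_part f) y"
    "ennreal (\<epsilon> * indicator B y) * c \<le> transfer_nn (neg_part f) y"
    unfolding c_def
    using transfer_nn_ge_minorization[of "pos_part f" y] transfer_nn_ge_minorization[of "neg_part f" y] assms
    by (auto simp: pos_part_nonneg neg_part_nonneg in_L1_2_def
        intro: order_trans[OF mult_left_mono[OF min.cobounded1]] order_trans[OF mult_left_mono[OF min.cobounded2]])
  have fin: "transfer_nn (pos_part f) y < \<infinity>" "transfer_nn (neg_part f) y < \<infinity>"
    using transfer_nn_finite[OF assms] by (auto simp: pos_part_nonneg neg_part_nonneg pos_part_le_abs neg_part_le_abs)
  show ?thesis
    unfolding c_def[symmetric] transfer_pos_neg_part[OF assms] by (rule ennreal_abs_diff_add_le[OF fin low])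
qed

lemma weighted_transfer_pos_neg_le:
  assumes "in_L1_2 f"
  shows "(\<integral>\<^sup>+y. ennreal (harris_weight y) * (transfer_nn (pos_part f) y + transfer_nn (neg_part f) y) \<partial>lebesgue)
    \<le> ennreal (1 + \<beta> * K) * L1_norm f + ennreal (\<beta> * \<gamma>) * L1_2_norm f"
proof -
  have [measurable]: "f \<in> borel_measurable lebesgue" using assms in_L1_2_def by auto
  define E where "E x = 1 + \<beta> * (\<gamma> * rho2 x + K)" for x :: "real^'d"
  have "(\<integral>\<^sup>+y. ennreal (harris_weight y) * (transfer_nn (pos_part f) y + transfer_nn (neg_part f) y) \<partial>lebesgue)
      = (\<integral>\<^sup>+y. ennreal (harris_weight y) * transfer_nn (pos_part f) y \<partial>lebesgue)
        + (\<integral>\<^sup>+y. ennreal (harris_weight y) * transfer_nn (neg_part f) y \<partial>lebesgue)"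
    by (subst nn_integral_add[symmetric]) (auto simp: distrib_left)
  also have "\<dots> \<le> (\<integral>\<^sup>+x. ennreal (pos_part f x * E x) \<partial>lebesgue) + (\<integral>\<^sup>+x. ennreal (neg_part f x * E x) \<partial>lebesgue)"
    unfolding E_def by (intro add_mono weighted_transfer_nn_le) (auto simp: pos_part_nonneg neg_part_nonneg)
  also have "\<dots> = (\<integral>\<^sup>+x. ennreal (1 + \<beta> * K) * ennreal \<bar>f x\<bar>
      + ennreal (\<beta> * \<gamma>) * ennreal (rho2 x * \<bar>f x\<bar>) \<partial>lebesgue)"
  proof (subst nn_integral_add[symmetric], simp_all add: E_def, intro nn_integral_cong)
    fix x :: "real^'d"
    have "pos_part f x * E x + neg_part f x * E x = (1 + \<beta> * K) * \<bar>f x\<bar> + (\<beta> * \<gamma>) * (rho2 x * \<bar>f x\<bar>)"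
      unfolding pos_neg_part_abs[of f x] E_def by (simp add: algebra_simps)
    moreover have "0 \<le> E x" "0 \<le> \<beta> * \<gamma>" "0 \<le> rho2 x"
      using beta_pos gamma K_pos rho2_ge_1[of x] by (auto simp: E_def)
    ultimately show "ennreal (pos_part f x * (1 + \<beta> * (\<gamma> * rho2 x + K)))
        + ennreal (neg_part f x * (1 + \<beta> * (\<gamma> * rho2 x + K)))
      = ennreal (1 + \<beta> * K) * ennreal \<bar>f x\<bar> + ennreal (\<beta> * \<gamma>) * ennreal (rho2 x * \<bar>f x\<bar>)"
      using beta_pos K_pos pos_part_nonneg[of f x] neg_part_nonneg[of f x]
      by (simp add: E_def ennreal_plus[symmetric] ennreal_mult[symmetric] del: ennreal_plus)
  qed
  also have "\<dots> = ennreal (1 + \<beta> * K) * L1_norm f + ennreal (\<beta> * \<gamma>) * L1_2_norm f"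
    unfolding L1_norm_def L1_2_norm_eq by (subst nn_integral_add) (auto simp: nn_integral_cmult)
  finally show ?thesis .
qed

lemma harris_norm_transfer_le:
  assumes "in_L1_2 f"
  shows "harris_norm (transfer \<kappa> f)
      + 2 * ennreal (\<epsilon> * vB) * min (sublevel_mass (pos_part f)) (sublevel_mass (neg_part f))
    \<le> ennreal (1 + \<beta> * K) * L1_norm f + ennreal (\<beta> * \<gamma>) * L1_2_norm f"
proof -
  have [measurable]: "f \<in> borel_measurable lebesgue" "transfer \<kappa> f \<in> borel_measurable lebesgue"
    using assms transfer_measurable in_L1_2_def by auto
  define c where "c = min (sublevel_mass (pos_part f)) (sublevel_mass (neg_part f))"
  define w where "w = harris_weight"
  have "harris_norm (transfer \<kappa> f) + 2 * (ennreal \<epsilon> * c) * ennreal vB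
      \<le> (\<integral>\<^sup>+y. ennreal (w y * \<bar>transfer \<kappa> f y\<bar>) \<partial>lebesgue)
        + 2 * (ennreal \<epsilon> * c) * (\<integral>\<^sup>+y. ennreal (w y * indicator B y) \<partial>lebesgue)"
    unfolding w_def harris_norm_eq[of "transfer \<kappa> f", simplified]
    by (intro add_mono mult_left_mono weighted_measure_B) auto
  also have "\<dots> = (\<integral>\<^sup>+y. ennreal (w y * \<bar>transfer \<kappa> f y\<bar>)
      + 2 * (ennreal \<epsilon> * c) * ennreal (w y * indicator B y) \<partial>lebesgue)"
    unfolding w_def by (subst nn_integral_add) (auto simp: nn_integral_cmult)
  also have "\<dots> = (\<integral>\<^sup>+y. ennreal (w y)
      * (ennreal \<bar>transfer \<kappa> f y\<bar> + 2 * (ennreal (\<epsilon> * indicator B y) * c)) \<partial>lebesgue)"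
    using harris_weight_nonneg eps_pos unfolding w_def
    by (intro nn_integral_cong) (simp add: ennreal_mult distrib_left ac_simps)
  also have "\<dots> \<le> (\<integral>\<^sup>+y. ennreal (w y) * (transfer_nn (pos_part f) y + transfer_nn (neg_part f) y) \<partial>lebesgue)"
    unfolding c_def by (intro nn_integral_mono mult_left_mono abs_transfer_coupling_le[OF assms]) simp
  also have "\<dots> \<le> ennreal (1 + \<beta> * K) * L1_norm f + ennreal (\<beta> * \<gamma>) * L1_2_norm f"
    unfolding w_def by (rule weighted_transfer_pos_neg_le[OF assms])
  finally show ?thesis
    unfolding c_def using eps_pos vB_pos by (simp add: ennreal_mult ac_simps)
qed

lemma in_L1_2_transfer:
  assumes "in_L1_2 f" shows "in_L1_2 (transfer \<kappa> f)"
proof -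
  have "ennreal \<beta> * L1_2_norm (transfer \<kappa> f) \<le> harris_norm (transfer \<kappa> f)"
    unfolding harris_norm_def by simp
  also have "\<dots> \<le> ennreal (1 + \<beta> * K) * L1_norm f + ennreal (\<beta> * \<gamma>) * L1_2_norm f"
    using harris_norm_transfer_le[OF assms] by (rule order_trans[rotated]) simp
  also have "\<dots> < \<infinity>"
    using assms in_L1_2_L1_norm_finite[OF assms] unfolding in_L1_2_def
    by (simp add: ennreal_mult_less_top less_top)
  finally show ?thesis
    using beta_pos transfer_measurable[OF assms]
    by (auto simp: in_L1_2_def ennreal_mult_less_top less_top[symmetric])
qed

lemma integral_transfer:
  assumes f: "in_L1_2 f" shows "integral\<^sup>L lebesgue (transfer \<kappa> f) = integral\<^sup>L lebesgue f"
proof -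
  have [measurable]: "f \<in> borel_measurable lebesgue" using f in_L1_2_def by auto
  have part: "integrable lebesgue (\<lambda>y. enn2real (transfer_nn h y))
      \<and> (\<integral>y. enn2real (transfer_nn h y) \<partial>lebesgue) = enn2real (\<integral>\<^sup>+x. h x \<partial>lebesgue)"
    if [measurable]: "h \<in> borel_measurable lebesgue" and h: "\<And>x. 0 \<le> h x" "\<And>x. h x \<le> \<bar>f x\<bar>" for h
  proof -
    have "(\<integral>\<^sup>+x. h x \<partial>lebesgue) \<le> L1_norm f"
      unfolding L1_norm_def using h by (intro nn_integral_mono ennreal_leI) auto
    then have fin: "(\<integral>\<^sup>+x. h x \<partial>lebesgue) < \<infinity>"
      using in_L1_2_L1_norm_finite[OF f] by (rule le_less_trans)
    have "(\<integral>\<^sup>+y. ennreal (enn2real (transfer_nn h y)) \<partial>lebesgue) = (\<integral>\<^sup>+y. transfer_nn h y \<partial>lebesgue)"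
      using transfer_nn_finite[OF f h] by (intro nn_integral_cong) (simp add: less_top)
    also have "\<dots> = (\<integral>\<^sup>+x. h x \<partial>lebesgue)"
      using h by (intro nn_integral_transfer_nn) simp_all
    finally have eq: "(\<integral>\<^sup>+y. ennreal (enn2real (transfer_nn h y)) \<partial>lebesgue) = (\<integral>\<^sup>+x. h x \<partial>lebesgue)" .
    show ?thesis
      using fin by (auto simp: eq integral_eq_nn_integral intro!: integrableI_nonneg)
  qed
  have "integral\<^sup>L lebesgue (transfer \<kappa> f)
      = (\<integral>y. enn2real (transfer_nn (pos_part f) y) - enn2real (transfer_nn (neg_part f) y) \<partial>lebesgue)"
    using transfer_pos_neg_part[OF f] by (intro Bochner_Integration.integral_cong) auto
  also have "\<dots> = enn2real (\<integral>\<^sup>+x. pos_part f x \<partial>lebesgue) - enn2real (\<integral>\<^sup>+x. neg_part f x \<partial>lebesgue)"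
    using part[of "pos_part f"] part[of "neg_part f"]
    by (simp add: pos_part_nonneg neg_part_nonneg pos_part_le_abs neg_part_le_abs)
  also have "\<dots> = integral\<^sup>L lebesgue f"
    using integral_pos_neg_part[OF in_L1_2_integrable[OF f]] by simp
  finally show ?thesis .
qed

lemma sublevel_mass_lower_bound:
  assumes [measurable]: "h \<in> borel_measurable lebesgue" and f: "in_L1_2 f"
    and h: "\<And>x. 0 \<le> h x" "\<And>x. h x \<le> \<bar>f x\<bar>" and mass: "(\<integral>\<^sup>+x. h x \<partial>lebesgue) = ennreal m"
  shows "sublevel_mass h = ennreal (enn2real (sublevel_mass h))"
    and "m \<le> enn2real (sublevel_mass h) + enn2real (L1_2_norm f) / R"
proof -
  have "sublevel_mass h \<le> ennreal m"
    unfolding sublevel_mass_def mass[symmetric] using h by (intro nn_integral_mono ennreal_leI) auto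
  then have "sublevel_mass h < \<top>" using ennreal_less_top by (rule le_less_trans)
  then show eq: "sublevel_mass h = ennreal (enn2real (sublevel_mass h))" by simp
  define nv where "nv = enn2real (L1_2_norm f)"
  have nv0: "0 \<le> nv" and NV: "L1_2_norm f = ennreal nv"
    using L1_2_norm_finite[OF f] by (auto simp: nv_def)
  have "ennreal m \<le> sublevel_mass h + ennreal (1 / R) * ennreal nv"
    using nn_integral_le_sublevel_mass[OF assms(1) _ h] f mass NV by (simp add: in_L1_2_def)
  also have "\<dots> = ennreal (enn2real (sublevel_mass h) + nv / R)"
    using R_pos nv0 by (subst eq) (simp add: ennreal_mult[symmetric] ennreal_plus[symmetric] del: ennreal_plus)
  finally show "m \<le> enn2real (sublevel_mass h) + enn2real (L1_2_norm f) / R"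
    using R_pos nv0 unfolding nv_def[symmetric] by (subst (asm) ennreal_le_iff) auto
qed

lemma harris_contraction:
  assumes f: "in_L1_2 f" and mean_zero: "integral\<^sup>L lebesgue f = 0"
  shows "harris_norm (transfer \<kappa> f) \<le> ennreal \<alpha> * harris_norm f"
proof -
  have [measurable]: "f \<in> borel_measurable lebesgue" using f in_L1_2_def by auto
  obtain m where m0: "0 \<le> m" and parts: "(\<integral>\<^sup>+x. pos_part f x \<partial>lebesgue) = ennreal m"
      "(\<integral>\<^sup>+x. neg_part f x \<partial>lebesgue) = ennreal m" and L1: "L1_norm f = ennreal (2 * m)"
    using mean_zero_pos_neg_part_mass[OF f mean_zero] by blast
  define nv where "nv = enn2real (L1_2_norm f)"
  have nv0: "0 \<le> nv" and NV: "L1_2_norm f = ennreal nv"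
    using L1_2_norm_finite[OF f] by (auto simp: nv_def)
  define a b where "a = enn2real (sublevel_mass (pos_part f))" and "b = enn2real (sublevel_mass (neg_part f))"
  have ab_nonneg: "0 \<le> a" "0 \<le> b" by (simp_all add: a_def b_def)
  note pos = sublevel_mass_lower_bound[of "pos_part f" f, folded a_def nv_def, OF _ f pos_part_nonneg pos_part_le_abs parts(1)]
  note neg = sublevel_mass_lower_bound[of "neg_part f" f, folded b_def nv_def, OF _ f neg_part_nonneg neg_part_le_abs parts(2)]
  have "min (sublevel_mass (pos_part f)) (sublevel_mass (neg_part f)) = ennreal (min a b)"
    using pos(1) neg(1) ab_nonneg by (simp add: min_ennreal)
  then have coupling: "harris_norm (transfer \<kappa> f) + ennreal (2 * \<epsilon> * min a b * vB)
      \<le> ennreal ((1 + \<beta> * K) * (2 * m) + \<beta> * \<gamma> * nv)"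
    using harris_norm_transfer_le[OF f] L1 NV eps_pos vB_pos ab_nonneg beta_pos K_pos gamma m0 nv0
    by (simp add: ennreal_mult ac_simps)
  define I where "I = enn2real (harris_norm (transfer \<kappa> f))"
  have "harris_norm (transfer \<kappa> f) < \<top>"
    using le_less_trans[OF order_trans[OF add_increasing2[OF zero_le order.refl] coupling] ennreal_less_top] .
  then have I: "harris_norm (transfer \<kappa> f) = ennreal I" by (simp add: I_def)
  have "0 \<le> I" "0 \<le> 2 * \<epsilon> * min a b * vB" using eps_pos vB_pos ab_nonneg by (simp_all add: I_def)
  then have "ennreal (I + 2 * \<epsilon> * min a b * vB) \<le> ennreal ((1 + \<beta> * K) * (2 * m) + \<beta> * \<gamma> * nv)"
    using coupling by (subst ennreal_plus) (simp_all add: I)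
  then have "I + 2 * \<epsilon> * min a b * vB \<le> (1 + \<beta> * K) * (2 * m) + \<beta> * \<gamma> * nv"
    using beta_pos K_pos gamma m0 nv0 by (subst (asm) ennreal_le_iff) auto
  then have "I \<le> \<alpha> * (2 * m + \<beta> * nv)"
    by (rule contraction_arith[OF _ pos(2) neg(2)]) (simp_all add: ab_nonneg m0 nv0)
  then have "harris_norm (transfer \<kappa> f) \<le> ennreal (\<alpha> * (2 * m + \<beta> * nv))"
    unfolding I by (rule ennreal_leI)
  also have "\<dots> = ennreal \<alpha> * harris_norm f"
    unfolding harris_norm_def L1 NV using alpha_nonneg beta_pos m0 nv0 by (simp add: ennreal_mult)
  finally show ?thesis .
qed

end

section \<open>Iterates and the resolvent\<close>

context harris_kernel begin

lemma in_V_L1_2_transfer: "in_V_L1_2 f \<Longrightarrow> in_V_L1_2 (transfer \<kappa> f)"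
  unfolding in_V_L1_2_def using in_L1_2_transfer integral_transfer by simp

lemma in_V_L1_2_transfer_iter: "in_V_L1_2 f \<Longrightarrow> in_V_L1_2 ((transfer \<kappa> ^^ n) f)"
  by (induction n) (auto intro: in_V_L1_2_transfer)

lemma harris_norm_transfer_iter_le:
  assumes "in_V_L1_2 f" shows "harris_norm ((transfer \<kappa> ^^ n) f) \<le> ennreal (\<alpha> ^ n) * harris_norm f"
proof (induction n)
  case (Suc n)
  have "harris_norm ((transfer \<kappa> ^^ Suc n) f) \<le> ennreal \<alpha> * harris_norm ((transfer \<kappa> ^^ n) f)"
    using harris_contraction in_V_L1_2_transfer_iter[OF assms, of n] by (simp add: in_V_L1_2_def)
  also have "\<dots> \<le> ennreal \<alpha> * (ennreal (\<alpha> ^ n) * harris_norm f)"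
    by (intro mult_left_mono Suc.IH) simp
  also have "\<dots> = ennreal (\<alpha> ^ Suc n) * harris_norm f"
    using alpha_nonneg by (simp add: ennreal_mult' mult.assoc)
  finally show ?case .
qed simp

definition "C_equiv = (1 + \<beta>) / \<beta>"

lemma C_equiv_pos: "0 < C_equiv"
  unfolding C_equiv_def using beta_pos by simp

lemma L1_2_norm_transfer_iter_le:
  assumes f: "in_V_L1_2 f"
  shows "enn2real (L1_2_norm ((transfer \<kappa> ^^ n) f)) \<le> C_equiv * \<alpha> ^ n * enn2real (L1_2_norm f)"
proof -
  define a b where "a = enn2real (L1_2_norm ((transfer \<kappa> ^^ n) f))" and "b = enn2real (L1_2_norm f)"
  have a: "L1_2_norm ((transfer \<kappa> ^^ n) f) = ennreal a" and b: "L1_2_norm f = ennreal b"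
    using L1_2_norm_finite in_V_L1_2_transfer_iter[OF f] f by (auto simp: a_def b_def in_V_L1_2_def)
  have "ennreal (\<beta> * a) \<le> harris_norm ((transfer \<kappa> ^^ n) f)"
    unfolding harris_norm_def a by (rule add_increasing) (use beta_pos in \<open>simp_all add: ennreal_mult'\<close>)
  also have "\<dots> \<le> ennreal (\<alpha> ^ n) * harris_norm f"
    by (rule harris_norm_transfer_iter_le[OF f])
  also have "\<dots> \<le> ennreal (\<alpha> ^ n) * (L1_2_norm f + ennreal \<beta> * L1_2_norm f)"
    unfolding harris_norm_def by (intro mult_left_mono add_mono L1_norm_le_L1_2_norm) simp_all
  also have "\<dots> = ennreal (\<alpha> ^ n * ((1 + \<beta>) * b))"
  proof -
    have "0 \<le> b" by (simp add: b_def)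
    then have "L1_2_norm f + ennreal \<beta> * L1_2_norm f = ennreal ((1 + \<beta>) * b)"
      unfolding b using beta_pos by (simp add: ennreal_mult' distrib_right)
    then show ?thesis using alpha_nonneg by (simp add: ennreal_mult')
  qed
  finally have "\<beta> * a \<le> \<alpha> ^ n * ((1 + \<beta>) * b)"
    using alpha_nonneg beta_pos by (subst (asm) ennreal_le_iff) (auto simp: b_def)
  then show ?thesis
    using beta_pos unfolding C_equiv_def a_def[symmetric] b_def[symmetric] by (simp add: field_simps)
qed

lemma abs_transfer_iter_le:
  assumes "in_V_L1_2 f"
  shows "\<bar>(transfer \<kappa> ^^ Suc n) f y\<bar> \<le> C0 * C_equiv * enn2real (L1_2_norm f) * \<alpha> ^ n"
proof -
  have "\<bar>(transfer \<kappa> ^^ Suc n) f y\<bar> \<le> C0 * enn2real (L1_2_norm ((transfer \<kappa> ^^ n) f))"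
    using abs_transfer_le in_V_L1_2_transfer_iter[OF assms] by (simp add: in_V_L1_2_def)
  also have "\<dots> \<le> C0 * (C_equiv * \<alpha> ^ n * enn2real (L1_2_norm f))"
    using L1_2_norm_transfer_iter_le[OF assms] C0_nonneg by (rule mult_left_mono)
  finally show ?thesis by (simp add: ac_simps)
qed

lemma transfer_fixed_point_zero:
  assumes u: "in_V_L1_2 u" and fixed: "\<And>y. transfer \<kappa> u y = u y"
  shows "L1_2_norm u = 0"
proof -
  have iter: "(transfer \<kappa> ^^ n) u = u" for n
  proof (induction n)
    case (Suc n)
    show ?case by (simp only: funpow.simps o_apply Suc.IH) (simp add: fun_eq_iff fixed)
  qed simp
  define x where "x = enn2real (L1_2_norm u)"
  have "x = 0"
  proof (rule ccontr)
    assume "x \<noteq> 0"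
    moreover have "0 \<le> x" by (simp add: x_def)
    ultimately have "0 < x" by simp
    obtain n where "\<alpha> ^ n < 1 / C_equiv"
      using real_arch_pow_inv[of "1 / C_equiv" \<alpha>] C_equiv_pos alpha_lt_1 by auto
    then have "C_equiv * \<alpha> ^ n * x < x" using \<open>0 < x\<close> C_equiv_pos by (simp add: field_simps)
    then show False using L1_2_norm_transfer_iter_le[OF u, of n] by (simp add: iter x_def)
  qed
  then show ?thesis using L1_2_norm_finite[of u] u by (simp add: in_V_L1_2_def x_def)
qed

lemma resolvent_injective:
  assumes f: "in_V_L1_2 f" and g: "in_V_L1_2 g"
    and eq: "AE y in lebesgue. f y - transfer \<kappa> f y = g y - transfer \<kappa> g y"
  shows "AE y in lebesgue. f y = g y"
proof -
  define e where "e y = f y - g y" for y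
  have e: "in_V_L1_2 e" unfolding e_def by (rule in_V_L1_2_diff[OF f g])
  then have [measurable]: "e \<in> borel_measurable lebesgue" by (simp add: in_V_L1_2_def in_L1_2_def)
  have transfer_e: "transfer \<kappa> e y = transfer \<kappa> f y - transfer \<kappa> g y" for y
    unfolding e_def using f g by (intro transfer_diff) (auto simp: in_V_L1_2_def)
  have ae_fixed: "AE y in lebesgue. transfer \<kappa> e y = e y"
    using eq by eventually_elim (auto simp: transfer_e e_def)
  have Le: "in_V_L1_2 (transfer \<kappa> e)" by (rule in_V_L1_2_transfer[OF e])
  then have "L1_2_norm (transfer \<kappa> e) = 0"
  proof (rule transfer_fixed_point_zero)
    show "transfer \<kappa> (transfer \<kappa> e) y = transfer \<kappa> e y" for y
      using Le ae_fixed by (intro transfer_cong_AE) (auto simp: in_V_L1_2_def in_L1_2_def)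
  qed
  then have "L1_2_norm e = 0" using L1_2_norm_cong[OF ae_fixed] by simp
  then have "AE y in lebesgue. e y = 0" by (rule L1_2_norm_zero_AE[rotated]) simp
  then show ?thesis by eventually_elim (simp add: e_def)
qed

definition neumann_tail :: "(real^'d \<Rightarrow> real) \<Rightarrow> real^'d \<Rightarrow> real" where
  "neumann_tail g y = (\<Sum>n. (transfer \<kappa> ^^ Suc n) g y)"

lemma summable_geometric_alpha: "summable (\<lambda>n. c * \<alpha> ^ n)" "(\<Sum>n. c * \<alpha> ^ n) = c / (1 - \<alpha>)"
  using alpha_nonneg alpha_lt_1 by (simp_all add: summable_mult suminf_mult suminf_geometric)

context
  fixes g :: "real^'d \<Rightarrow> real" assumes g: "in_V_L1_2 g"
begin

lemma transfer_iter_in_L1_2: "in_L1_2 ((transfer \<kappa> ^^ n) g)"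
  using in_V_L1_2_transfer_iter[OF g] by (simp add: in_V_L1_2_def)

lemma transfer_iter_measurable[measurable]: "(transfer \<kappa> ^^ n) g \<in> borel_measurable lebesgue"
  using transfer_iter_in_L1_2 by (simp add: in_L1_2_def)

lemma abs_transfer_iter_summable: "summable (\<lambda>n. \<bar>(transfer \<kappa> ^^ Suc n) g y\<bar>)"
  by (rule summable_comparison_test[OF _ summable_geometric_alpha(1)]) (use abs_transfer_iter_le[OF g] in auto)

lemma abs_neumann_tail_le:
  "\<bar>neumann_tail g y\<bar> \<le> C0 * C_equiv * enn2real (L1_2_norm g) / (1 - \<alpha>)"
proof -
  have "\<bar>neumann_tail g y\<bar> \<le> (\<Sum>n. \<bar>(transfer \<kappa> ^^ Suc n) g y\<bar>)"
    unfolding neumann_tail_def by (rule summable_rabs[OF abs_transfer_iter_summable])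
  also have "\<dots> \<le> (\<Sum>n. C0 * C_equiv * enn2real (L1_2_norm g) * \<alpha> ^ n)"
    by (intro suminf_le abs_transfer_iter_summable summable_geometric_alpha abs_transfer_iter_le[OF g])
  finally show ?thesis by (simp add: summable_geometric_alpha(2))
qed

lemma neumann_tail_measurable[measurable]: "neumann_tail g \<in> borel_measurable lebesgue"
  unfolding neumann_tail_def by measurable

lemma L1_2_norm_neumann_tail_le:
  "L1_2_norm (neumann_tail g) \<le> ennreal (C_equiv * \<alpha> * enn2real (L1_2_norm g) / (1 - \<alpha>))"
proof -
  define h where "h n = (transfer \<kappa> ^^ Suc n) g" for n
  have "L1_2_norm (neumann_tail g) \<le> (\<integral>\<^sup>+x. (\<Sum>n. ennreal (rho2 x * \<bar>h n x\<bar>)) \<partial>lebesgue)"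
    unfolding L1_2_norm_eq
  proof (intro nn_integral_mono)
    fix x
    have "\<bar>neumann_tail g x\<bar> \<le> (\<Sum>n. \<bar>h n x\<bar>)"
      unfolding neumann_tail_def h_def by (rule summable_rabs[OF abs_transfer_iter_summable])
    then have "rho2 x * \<bar>neumann_tail g x\<bar> \<le> (\<Sum>n. rho2 x * \<bar>h n x\<bar>)"
      using rho2_ge_1[of x] abs_transfer_iter_summable
      by (simp add: suminf_mult h_def mult_left_mono)
    then show "ennreal (rho2 x * \<bar>neumann_tail g x\<bar>) \<le> (\<Sum>n. ennreal (rho2 x * \<bar>h n x\<bar>))"
      using rho2_ge_1[of x] abs_transfer_iter_summable
      by (subst suminf_ennreal2) (auto intro!: ennreal_leI summable_mult simp: h_def)
  qed
  also have "\<dots> = (\<Sum>n. L1_2_norm (h n))"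
    unfolding L1_2_norm_eq h_def by (rule nn_integral_suminf) measurable
  also have "\<dots> \<le> (\<Sum>n. ennreal ((C_equiv * \<alpha> * enn2real (L1_2_norm g)) * \<alpha> ^ n))"
  proof (intro suminf_le summableI)
    fix n
    have "L1_2_norm (h n) = ennreal (enn2real (L1_2_norm (h n)))"
      unfolding h_def by (rule L1_2_norm_finite[OF transfer_iter_in_L1_2])
    also have "\<dots> \<le> ennreal ((C_equiv * \<alpha> * enn2real (L1_2_norm g)) * \<alpha> ^ n)"
      using L1_2_norm_transfer_iter_le[OF g, of "Suc n"] by (intro ennreal_leI) (simp add: h_def ac_simps)
    finally show "L1_2_norm (h n) \<le> ennreal ((C_equiv * \<alpha> * enn2real (L1_2_norm g)) * \<alpha> ^ n)" .
  qed
  also have "\<dots> = ennreal (C_equiv * \<alpha> * enn2real (L1_2_norm g) / (1 - \<alpha>))"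
    using C_equiv_pos alpha_nonneg alpha_lt_1
    by (subst suminf_ennreal2) (simp_all add: summable_geometric_alpha)
  finally show ?thesis .
qed

lemma in_V_L1_2_neumann_tail: "in_V_L1_2 (neumann_tail g)"
proof -
  note h = transfer_iter_in_L1_2[of "Suc n" for n]
  have L1: "in_L1_2 (neumann_tail g)"
    using L1_2_norm_neumann_tail_le unfolding in_L1_2_def
    by (auto intro: le_less_trans[OF _ ennreal_less_top])
  have "summable (\<lambda>n. \<integral>x. norm ((transfer \<kappa> ^^ Suc n) g x) \<partial>lebesgue)"
  proof (rule summable_comparison_test[OF _ summable_geometric_alpha(1)], intro exI allI impI)
    fix n :: nat
    have "(\<integral>x. norm ((transfer \<kappa> ^^ Suc n) g x) \<partial>lebesgue) \<le> enn2real (L1_2_norm ((transfer \<kappa> ^^ Suc n) g))"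
      using integral_abs_le_L1_2_norm[OF h] by simp
    also have "\<dots> \<le> (C_equiv * \<alpha> * enn2real (L1_2_norm g)) * \<alpha> ^ n"
      using L1_2_norm_transfer_iter_le[OF g, of "Suc n"] by (simp add: ac_simps)
    finally show "norm (\<integral>x. norm ((transfer \<kappa> ^^ Suc n) g x) \<partial>lebesgue) \<le> (C_equiv * \<alpha> * enn2real (L1_2_norm g)) * \<alpha> ^ n"
      by simp
  qed
  then have "integral\<^sup>L lebesgue (neumann_tail g) = (\<Sum>n. integral\<^sup>L lebesgue ((transfer \<kappa> ^^ Suc n) g))"
    unfolding neumann_tail_def using h abs_transfer_iter_summable
    by (intro integral_suminf) (auto intro: in_L1_2_integrable)
  also have "\<dots> = 0"
    using in_V_L1_2_transfer_iter[OF g, of "Suc n" for n] by (simp add: in_V_L1_2_def)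
  finally show ?thesis using L1 by (simp add: in_V_L1_2_def)
qed

lemma L1_2_norm_add_neumann_tail_le:
  "L1_2_norm (\<lambda>y. g y + neumann_tail g y) \<le> ennreal ((1 + C_equiv * \<alpha> / (1 - \<alpha>)) * enn2real (L1_2_norm g))"
proof -
  have [measurable]: "g \<in> borel_measurable lebesgue" using g by (simp add: in_V_L1_2_def in_L1_2_def)
  have "L1_2_norm (\<lambda>y. g y + neumann_tail g y) \<le> L1_2_norm g + L1_2_norm (neumann_tail g)"
    by (rule L1_2_norm_add_le) (simp_all add: neumann_tail_measurable)
  also have "\<dots> \<le> ennreal (enn2real (L1_2_norm g)) + ennreal (C_equiv * \<alpha> * enn2real (L1_2_norm g) / (1 - \<alpha>))"
    using L1_2_norm_neumann_tail_le L1_2_norm_finite[of g] g by (simp add: in_V_L1_2_def add_left_mono)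
  also have "\<dots> = ennreal ((1 + C_equiv * \<alpha> / (1 - \<alpha>)) * enn2real (L1_2_norm g))"
    using C_equiv_pos alpha_nonneg alpha_lt_1 by (subst ennreal_plus[symmetric]) (simp_all add: algebra_simps)
  finally show ?thesis .
qed

lemma transfer_add_neumann_tail:
  "transfer \<kappa> (\<lambda>x. g x + neumann_tail g x) y = neumann_tail g y"
proof -
  define h where "h n = (transfer \<kappa> ^^ Suc n) g" for n
  have h: "in_L1_2 (h n)" for n
    unfolding h_def by (rule transfer_iter_in_L1_2)
  have "summable (\<lambda>n. C0 * ((C_equiv * \<alpha> * enn2real (L1_2_norm g)) * \<alpha> ^ n))"
    by (intro summable_mult summable_geometric_alpha)
  then have integral_summable: "summable (\<lambda>n. \<integral>x. norm (\<kappa> x y * h n x) \<partial>lebesgue)"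
  proof (rule summable_comparison_test[rotated], intro exI allI impI)
    fix n :: nat
    have "(\<integral>x. norm (\<kappa> x y * h n x) \<partial>lebesgue) \<le> (\<integral>x. C0 * \<bar>h n x\<bar> \<partial>lebesgue)"
      using integrable_abs[OF in_L1_2_integrable_kernel_mult[OF h]] in_L1_2_integrable[OF h]
        kernel_nonneg kernel_bounded
      by (intro integral_mono) (auto simp: abs_mult intro!: mult_right_mono)
    also have "\<dots> \<le> C0 * enn2real (L1_2_norm (h n))"
      using integral_abs_le_L1_2_norm[OF h] C0_nonneg by (simp add: mult_left_mono)
    also have "\<dots> \<le> C0 * ((C_equiv * \<alpha> * enn2real (L1_2_norm g)) * \<alpha> ^ n)"
      using L1_2_norm_transfer_iter_le[OF g, of "Suc n"] C0_nonneg
      by (intro mult_left_mono) (simp_all add: h_def ac_simps)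
    finally show "norm (\<integral>x. norm (\<kappa> x y * h n x) \<partial>lebesgue) \<le> C0 * ((C_equiv * \<alpha> * enn2real (L1_2_norm g)) * \<alpha> ^ n)"
      by simp
  qed
  have pointwise_summable: "summable (\<lambda>n. norm (\<kappa> x y * h n x))" for x
    using summable_mult[OF abs_transfer_iter_summable, of "\<kappa> x y" x] kernel_nonneg
    by (simp add: h_def abs_mult)
  have "(\<lambda>x. \<kappa> x y * neumann_tail g x) = (\<lambda>x. \<Sum>n. \<kappa> x y * h n x)"
    unfolding neumann_tail_def h_def using abs_transfer_iter_summable
    by (auto simp: suminf_mult summable_rabs_cancel fun_eq_iff)
  then have "(\<integral>x. \<kappa> x y * neumann_tail g x \<partial>lebesgue) = (\<Sum>n. \<integral>x. \<kappa> x y * h n x \<partial>lebesgue)"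
    using in_L1_2_integrable_kernel_mult[OF h] pointwise_summable integral_summable
    by (simp add: integral_suminf)
  then have kernel_sum: "(\<integral>x. \<kappa> x y * neumann_tail g x \<partial>lebesgue) = (\<Sum>n. h (Suc n) y)"
    by (simp add: h_def transfer_def)
  have "transfer \<kappa> (\<lambda>x. g x + neumann_tail g x) y
      = transfer \<kappa> g y + (\<integral>x. \<kappa> x y * neumann_tail g x \<partial>lebesgue)"
    unfolding transfer_def using in_L1_2_integrable_kernel_mult g in_V_L1_2_neumann_tail
    by (simp add: distrib_left in_V_L1_2_def)
  also have "\<dots> = neumann_tail g y"
    unfolding kernel_sum
    using suminf_split_head[OF summable_rabs_cancel[OF abs_transfer_iter_summable]]
    by (simp add: h_def neumann_tail_def)
  finally show ?thesis .
qed

end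

context
  fixes D :: "(real^'d) set"
  assumes D_sets[measurable]: "D \<in> sets lebesgue" and D_finite: "emeasure lebesgue D < \<infinity>"
begin

lemma transfer_V_B: assumes "f \<in> V_B D" shows "transfer \<kappa> f \<in> V_B D"
proof -
  have f: "in_V_L1_2 f" using assms by (simp add: V_B_iff)
  then have "L2_on_norm D (transfer \<kappa> f) \<le> ennreal (C0 * enn2real (L1_2_norm f) * sqrt (measure lebesgue D))"
    using transfer_measurable abs_transfer_le
    by (intro L2_on_norm_le_bound[OF D_sets D_finite]) (auto simp: in_V_L1_2_def)
  then have "L2_on_norm D (transfer \<kappa> f) < \<infinity>"
    using ennreal_less_top le_less_trans by (metis infinity_ennreal_def)
  then show ?thesis using in_V_L1_2_transfer[OF f] by (simp add: V_B_iff)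
qed

lemma strong_norm_transfer_iter_tendsto:
  assumes "f \<in> V_B D" shows "(\<lambda>n. strong_norm D ((transfer \<kappa> ^^ n) f)) \<longlonglongrightarrow> 0"
proof (rule LIMSEQ_imp_Suc)
  have f: "in_V_L1_2 f" using assms by (simp add: V_B_iff)
  define nv where "nv = enn2real (L1_2_norm f)"
  define c where "c = C_equiv * \<alpha> * nv + C0 * C_equiv * nv * sqrt (measure lebesgue D)"
  have bound: "strong_norm D ((transfer \<kappa> ^^ Suc n) f) \<le> ennreal (c * \<alpha> ^ n)" for n
  proof -
    have "in_L1_2 ((transfer \<kappa> ^^ Suc n) f)"
      using in_V_L1_2_transfer_iter[OF f] by (simp add: in_V_L1_2_def del: funpow.simps)
    then have "L1_2_norm ((transfer \<kappa> ^^ Suc n) f) = ennreal (enn2real (L1_2_norm ((transfer \<kappa> ^^ Suc n) f)))"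
      by (rule L1_2_norm_finite)
    also have "\<dots> \<le> ennreal (C_equiv * \<alpha> ^ Suc n * nv)"
      using L1_2_norm_transfer_iter_le[OF f, of "Suc n"] unfolding nv_def by (rule ennreal_leI)
    finally have "L1_2_norm ((transfer \<kappa> ^^ Suc n) f) \<le> ennreal (C_equiv * \<alpha> * nv * \<alpha> ^ n)"
      by (simp add: ac_simps)
    moreover have "L2_on_norm D ((transfer \<kappa> ^^ Suc n) f)
        \<le> ennreal (C0 * C_equiv * nv * \<alpha> ^ n * sqrt (measure lebesgue D))"
      using in_V_L1_2_transfer_iter[OF f, of "Suc n"] abs_transfer_iter_le[OF f]
      by (intro L2_on_norm_le_bound[OF D_sets D_finite])
         (simp_all add: in_V_L1_2_def in_L1_2_def nv_def del: funpow.simps)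
    ultimately have "strong_norm D ((transfer \<kappa> ^^ Suc n) f)
        \<le> ennreal (C_equiv * \<alpha> * nv * \<alpha> ^ n) + ennreal (C0 * C_equiv * nv * \<alpha> ^ n * sqrt (measure lebesgue D))"
      unfolding strong_norm_def by (rule add_mono)
    also have "\<dots> = ennreal (C_equiv * \<alpha> * nv * \<alpha> ^ n + C0 * C_equiv * nv * \<alpha> ^ n * sqrt (measure lebesgue D))"
      using C0_nonneg C_equiv_pos alpha_nonneg by (intro ennreal_plus[symmetric]) (simp_all add: nv_def)
    also have "\<dots> = ennreal (c * \<alpha> ^ n)"
      by (simp add: c_def algebra_simps)
    finally show ?thesis .
  qed
  have "(\<lambda>n. ennreal (c * \<alpha> ^ n)) \<longlonglongrightarrow> ennreal (c * 0)"
    using alpha_nonneg alpha_lt_1 by (intro tendsto_ennrealI tendsto_mult tendsto_const LIMSEQ_power_zero) auto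
  then have lim: "(\<lambda>n. ennreal (c * \<alpha> ^ n)) \<longlonglongrightarrow> 0" by simp
  show "(\<lambda>n. strong_norm D ((transfer \<kappa> ^^ Suc n) f)) \<longlonglongrightarrow> 0"
    by (rule tendsto_sandwich[OF _ _ tendsto_const lim]) (auto intro!: always_eventually bound simp del: funpow.simps)
qed

definition "C_res = 1 + C_equiv * \<alpha> / (1 - \<alpha>) + sqrt 2 + sqrt 2 * (C0 * C_equiv / (1 - \<alpha>)) * sqrt (measure lebesgue D)"

lemma L2_on_norm_add_neumann_tail_le:
  assumes g: "in_V_L1_2 g" and L2g: "L2_on_norm D g < \<infinity>"
  shows "L2_on_norm D (\<lambda>y. g y + neumann_tail g y)
    \<le> ennreal (sqrt 2 * enn2real (L2_on_norm D g)
        + sqrt 2 * (C0 * C_equiv / (1 - \<alpha>)) * sqrt (measure lebesgue D) * enn2real (L1_2_norm g))"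
proof -
  have [measurable]: "g \<in> borel_measurable lebesgue" using g by (simp add: in_V_L1_2_def in_L1_2_def)
  have "L2_on_norm D (\<lambda>y. g y + neumann_tail g y) \<le> ennreal (sqrt 2) * L2_on_norm D g
      + ennreal (sqrt 2 * (C0 * C_equiv * enn2real (L1_2_norm g) / (1 - \<alpha>)) * sqrt (measure lebesgue D))"
    using abs_neumann_tail_le[OF g]
    by (intro L2_on_norm_add_bounded_le[OF D_sets D_finite] L2g) (simp_all add: neumann_tail_measurable[OF g])
  also have "\<dots> = ennreal (sqrt 2 * enn2real (L2_on_norm D g)
      + sqrt 2 * (C0 * C_equiv / (1 - \<alpha>)) * sqrt (measure lebesgue D) * enn2real (L1_2_norm g))"
    using L2g C0_nonneg C_equiv_pos alpha_lt_1
    by (subst ennreal_plus) (simp_all add: ennreal_mult less_top ac_simps)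
  finally show ?thesis .
qed

lemma strong_norm_add_neumann_tail_le:
  assumes "g \<in> V_B D"
  shows "strong_norm D (\<lambda>y. g y + neumann_tail g y) \<le> ennreal C_res * strong_norm D g"
proof -
  have g: "in_V_L1_2 g" and L2g: "L2_on_norm D g < \<infinity>" using assms by (auto simp: V_B_iff)
  define nvg l2 where "nvg = enn2real (L1_2_norm g)" and "l2 = enn2real (L2_on_norm D g)"
  define X Y where "X = C_equiv * \<alpha> / (1 - \<alpha>)"
    and "Y = sqrt 2 * (C0 * C_equiv / (1 - \<alpha>)) * sqrt (measure lebesgue D)"
  have nonneg: "0 \<le> nvg" "0 \<le> l2" "0 \<le> X" "0 \<le> Y"
    using C_equiv_pos alpha_nonneg alpha_lt_1 C0_nonneg by (auto simp: nvg_def l2_def X_def Y_def)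
  have "strong_norm D (\<lambda>y. g y + neumann_tail g y) \<le> ennreal ((1 + X) * nvg) + ennreal (sqrt 2 * l2 + Y * nvg)"
    unfolding strong_norm_def nvg_def l2_def X_def Y_def
    using L1_2_norm_add_neumann_tail_le[OF g] L2_on_norm_add_neumann_tail_le[OF g L2g]
    by (rule add_mono)
  also have "\<dots> = ennreal ((1 + X) * nvg + (sqrt 2 * l2 + Y * nvg))"
    using nonneg by (subst ennreal_plus[symmetric]) simp_all
  also have "\<dots> \<le> ennreal (C_res * (nvg + l2))"
  proof (rule ennreal_leI)
    have "C_res * (nvg + l2) = (1 + X) * nvg + (sqrt 2 * l2 + Y * nvg) + (sqrt 2 * nvg + (1 + X + Y) * l2)"
      unfolding C_res_def X_def[symmetric] Y_def[symmetric] by (simp add: algebra_simps)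
    moreover have "0 \<le> sqrt 2 * nvg + (1 + X + Y) * l2" using nonneg by simp
    ultimately show "(1 + X) * nvg + (sqrt 2 * l2 + Y * nvg) \<le> C_res * (nvg + l2)" by linarith
  qed
  also have "\<dots> = ennreal C_res * strong_norm D g"
  proof -
    have "strong_norm D g = ennreal (nvg + l2)"
      using L1_2_norm_finite[of g] g L2g nonneg
      by (simp add: strong_norm_def nvg_def l2_def in_V_L1_2_def less_top)
    moreover have "0 \<le> C_res" unfolding C_res_def X_def[symmetric] Y_def[symmetric] using nonneg by simp
    ultimately show ?thesis by (simp add: ennreal_mult')
  qed
  finally show ?thesis .
qed

lemma resolvent_exists:
  assumes "g \<in> V_B D"
  shows "\<exists>f\<in>V_B D. (\<forall>y. f y - transfer \<kappa> f y = g y) \<and> strong_norm D f \<le> ennreal C_res * strong_norm D g"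
proof (intro bexI conjI allI)
  have g: "in_V_L1_2 g" and L2g: "L2_on_norm D g < \<infinity>" using assms by (auto simp: V_B_iff)
  show "(g y + neumann_tail g y) - transfer \<kappa> (\<lambda>y. g y + neumann_tail g y) y = g y" for y
    using transfer_add_neumann_tail[OF g, of y] by simp
  show "strong_norm D (\<lambda>y. g y + neumann_tail g y) \<le> ennreal C_res * strong_norm D g"
    by (rule strong_norm_add_neumann_tail_le[OF assms])
  show "(\<lambda>y. g y + neumann_tail g y) \<in> V_B D"
    using in_V_L1_2_add[OF g in_V_L1_2_neumann_tail[OF g]] L2_on_norm_add_neumann_tail_le[OF g L2g]
    by (auto simp: V_B_iff intro: le_less_trans)
qed

lemma resolvent_bounded:
  "\<exists>C::real. \<forall>f\<in>V_B D. strong_norm D f \<le> ennreal C * strong_norm D (\<lambda>y. f y - transfer \<kappa> f y)"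
proof (intro exI ballI)
  fix f assume f: "f \<in> V_B D"
  have "(\<lambda>y. f y - transfer \<kappa> f y) \<in> V_B D" by (rule V_B_diff[OF D_sets f transfer_V_B[OF f]])
  then obtain F where F: "F \<in> V_B D" "\<forall>y. F y - transfer \<kappa> F y = f y - transfer \<kappa> f y"
    and bound: "strong_norm D F \<le> ennreal C_res * strong_norm D (\<lambda>y. f y - transfer \<kappa> f y)"
    using resolvent_exists by blast
  have "AE y in lebesgue. f y = F y"
    by (rule resolvent_injective) (use f F in \<open>auto simp: V_B_iff\<close>)
  with bound show "strong_norm D f \<le> ennreal C_res * strong_norm D (\<lambda>y. f y - transfer \<kappa> f y)"
    by (simp add: strong_norm_cong)
qed

lemma V_B_transfer_properties:
  "(\<forall>f\<in>V_B D. (\<lambda>n. strong_norm D ((transfer \<kappa> ^^ n) f)) \<longlonglongrightarrow> 0)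
    \<and> (\<forall>f\<in>V_B D. transfer \<kappa> f \<in> V_B D)
    \<and> (\<forall>g\<in>V_B D. \<exists>f\<in>V_B D. AE y in lebesgue. f y - transfer \<kappa> f y = g y)
    \<and> (\<forall>f\<in>V_B D. \<forall>g\<in>V_B D. (AE y in lebesgue. f y - transfer \<kappa> f y = g y - transfer \<kappa> g y)
          \<longrightarrow> (AE y in lebesgue. f y = g y))
    \<and> (\<exists>C::real. \<forall>f\<in>V_B D. strong_norm D f \<le> ennreal C * strong_norm D (\<lambda>y. f y - transfer \<kappa> f y))"
proof (intro conjI ballI impI)
  show "\<exists>f\<in>V_B D. AE y in lebesgue. f y - transfer \<kappa> f y = g y" if "g \<in> V_B D" for g
    using resolvent_exists[OF that] by auto
  show "AE y in lebesgue. f y = g y"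
    if "f \<in> V_B D" "g \<in> V_B D" "AE y in lebesgue. f y - transfer \<kappa> f y = g y - transfer \<kappa> g y" for f g
    using resolvent_injective that by (simp add: V_B_iff)
qed (fact strong_norm_transfer_iter_tendsto transfer_V_B resolvent_bounded)+

end

end

section \<open>Gaussian transition kernels of dissipative diffusions\<close>

lemma has_real_derivative_norm_sq:
  fixes p :: "real \<Rightarrow> 'a::real_inner"
  assumes "(p has_vector_derivative v) (at t within S)"
  shows "((\<lambda>s. (norm (p s))\<^sup>2) has_real_derivative 2 * (p t \<bullet> v)) (at t within S)"
proof -
  have p: "(p has_derivative (\<lambda>h. h *\<^sub>R v)) (at t within S)"
    using assms unfolding has_vector_derivative_def .
  have "((\<lambda>s. p s \<bullet> p s) has_derivative (\<lambda>h. p t \<bullet> (h *\<^sub>R v) + (h *\<^sub>R v) \<bullet> p t)) (at t within S)"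
    by (rule has_derivative_inner[OF p p])
  moreover have "(\<lambda>h. p t \<bullet> (h *\<^sub>R v) + (h *\<^sub>R v) \<bullet> p t) = (*) (2 * (p t \<bullet> v))"
    by (auto simp: fun_eq_iff inner_commute algebra_simps)
  ultimately show ?thesis by (simp add: has_field_derivative_def power2_norm_eq_inner)
qed

lemma dissipative_flow_norm_sq_le:
  fixes b :: "real^'d \<Rightarrow> real^'d" and \<theta> :: "real \<Rightarrow> real^'d \<Rightarrow> real^'d"
  assumes flow: "is_forward_flow b \<theta>" and c2: "0 < c2"
    and dissip: "\<And>x. b x \<bullet> x \<le> c1 - c2 * (norm x)\<^sup>2"
  shows "(norm (\<theta> 1 x))\<^sup>2 \<le> exp (- 2 * c2) * (norm x)\<^sup>2 + c1 / c2"
proof -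
  have c1: "0 \<le> c1" using dissip[of 0] c2 by simp
  define p where "p s = \<theta> s x" for s
  define \<phi> where "\<phi> s = exp (2 * c2 * s) * ((norm (p s))\<^sup>2 - c1 / c2)" for s
  define \<phi>' where "\<phi>' t = exp (2 * c2 * t) * (2 * c2 * ((norm (p t))\<^sup>2 - c1 / c2) + 2 * (p t \<bullet> b (p t)))" for t
  have \<phi>_deriv: "(\<phi> has_real_derivative \<phi>' t) (at t within {0..})" if "0 \<le> t" for t
  proof -
    have "(p has_vector_derivative b (p t)) (at t within {0..})"
      using flow that unfolding is_forward_flow_def p_def by simp
    note norm_sq = has_real_derivative_norm_sq[OF this]
    show ?thesis
      unfolding \<phi>_def \<phi>'_def by (rule derivative_eq_intros norm_sq refl | simp)+ (simp add: algebra_simps)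
  qed
  \<comment> \<open>dissipativity makes the weighted excess energy \<phi> nonincreasing\<close>
  have \<phi>'_nonpos: "\<phi>' t \<le> 0" for t
  proof -
    have "p t \<bullet> b (p t) \<le> c1 - c2 * (norm (p t))\<^sup>2" using dissip[of "p t"] by (simp add: inner_commute)
    moreover have "2 * c2 * ((norm (p t))\<^sup>2 - c1 / c2) = 2 * c2 * (norm (p t))\<^sup>2 - 2 * c1"
      using c2 by (simp add: field_simps)
    ultimately have "2 * c2 * ((norm (p t))\<^sup>2 - c1 / c2) + 2 * (p t \<bullet> b (p t)) \<le> 0"
      by linarith
    then show ?thesis unfolding \<phi>'_def by (simp add: mult_nonneg_nonpos)
  qed
  have "continuous_on {0..1} \<phi>"
    unfolding continuous_on_eq_continuous_within
  proof
    fix t :: real assume "t \<in> {0..1}"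
    then have "continuous (at t within {0..}) \<phi>" using \<phi>_deriv[of t] by (intro DERIV_continuous) auto
    then show "continuous (at t within {0..1}) \<phi>" by (rule continuous_within_subset) auto
  qed
  moreover have "(\<phi> has_derivative (*) (\<phi>' t)) (at t)" if "0 < t" "t < 1" for t
    using \<phi>_deriv[of t] that at_within_interior[of t "{0..}"] by (simp add: has_field_derivative_def)
  ultimately obtain \<xi> where "\<phi> 1 - \<phi> 0 = \<phi>' \<xi> * (1 - 0)"
    using mvt[of 0 1 \<phi> "\<lambda>t. (*) (\<phi>' t)"] by auto
  then have "\<phi> 1 \<le> \<phi> 0" using \<phi>'_nonpos[of \<xi>] by simp
  moreover have "p 0 = x" using flow unfolding is_forward_flow_def p_def by simp
  ultimately have "exp (2 * c2) * ((norm (\<theta> 1 x))\<^sup>2 - c1 / c2) \<le> (norm x)\<^sup>2 - c1 / c2"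
    by (simp add: \<phi>_def p_def)
  then have "(norm (\<theta> 1 x))\<^sup>2 - c1 / c2 \<le> exp (- 2 * c2) * ((norm x)\<^sup>2 - c1 / c2)"
    by (simp add: exp_minus field_simps)
  moreover have "0 \<le> exp (- 2 * c2) * (c1 / c2)" using c1 c2 by simp
  ultimately show ?thesis by (simp add: algebra_simps)
qed

lemma (in prob_space) distributed_nn_integral_density:
  assumes "distributed M N X f" shows "(\<integral>\<^sup>+x. f x \<partial>N) = 1"
proof -
  have "prob_space (density N f)"
    using prob_space_distr[OF distributed_measurable[OF assms]] distributed_distr_eq_density[OF assms]
    by simp
  then show ?thesis
    using distributed_borel_measurable[OF assms] prob_space.emeasure_space_1
    by (fastforce simp: emeasure_density)
qed

text \<open>
  The Gaussian integral is finite because, up to a constant, its integrand is the density of the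
  Brownian increment \<open>W \<tau> - W 0\<close>, which has total mass 1.
\<close>
lemma gaussian_nn_integral_finite:
  fixes W :: "real \<Rightarrow> 'a \<Rightarrow> real^'d"
  assumes BM: "std_brownian M W" and a: "0 < a"
  shows "(\<integral>\<^sup>+z. ennreal (exp (- a * (norm z)\<^sup>2)) \<partial>(lborel :: (real^'d) measure)) < \<infinity>"
proof -
  define \<tau> where "\<tau> = 1 / (2 * a)"
  define c where "c = (2 * pi * \<tau>) powr (- real CARD('d) / 2)"
  have "0 < \<tau>" "0 < c" using a by (simp_all add: \<tau>_def c_def)
  have prob: "prob_space M" using BM by (simp add: std_brownian_def)
  have "\<forall>s t. 0 \<le> s \<and> s < t \<longrightarrow>
      distributed M lborel (\<lambda>\<omega>. W t \<omega> - W s \<omega>) (\<lambda>z. ennreal (gauss_density (t - s) z))"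
    using BM unfolding std_brownian_def by blast
  then have "distributed M lborel (\<lambda>\<omega>. W \<tau> \<omega> - W 0 \<omega>) (\<lambda>z. ennreal (gauss_density (\<tau> - 0) z))"
    using \<open>0 < \<tau>\<close> by blast
  then have "(\<integral>\<^sup>+z. ennreal (gauss_density \<tau> z) \<partial>(lborel :: (real^'d) measure)) = 1"
    using prob_space.distributed_nn_integral_density[OF prob] by simp
  moreover have "gauss_density \<tau> z = c * exp (- a * (norm z)\<^sup>2)" for z :: "real^'d"
    unfolding gauss_density_def c_def \<tau>_def using a by (simp add: field_simps)
  ultimately have "ennreal c * (\<integral>\<^sup>+z. ennreal (exp (- a * (norm z)\<^sup>2)) \<partial>(lborel :: (real^'d) measure)) = 1"
    using \<open>0 < c\<close> by (subst nn_integral_cmult[symmetric]) (auto simp: ennreal_mult)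
  then have "(\<integral>\<^sup>+z. ennreal (exp (- a * (norm z)\<^sup>2)) \<partial>(lborel :: (real^'d) measure)) \<noteq> \<top>"
    using \<open>0 < c\<close> by (auto simp: ennreal_mult_eq_top_iff)
  then show ?thesis by (simp add: less_top)
qed

lemma norm_sq_le_peter_paul:
  fixes y t :: "'a::real_normed_vector" assumes e: "0 < e"
  shows "(norm y)\<^sup>2 \<le> (1 + e) * (norm t)\<^sup>2 + (1 + 1 / e) * (norm (y - t))\<^sup>2"
proof -
  define u v where "u = norm t" and "v = norm (y - t)"
  have "norm y \<le> u + v" using norm_triangle_ineq[of t "y - t"] by (simp add: u_def v_def)
  then have "(norm y)\<^sup>2 \<le> (u + v)\<^sup>2" by (intro power_mono) auto
  moreover have "0 \<le> (e * u - v)\<^sup>2 / e" using e by simp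
  moreover have "(e * u - v)\<^sup>2 / e = e * u\<^sup>2 - 2 * u * v + v\<^sup>2 / e"
    using e by (simp add: power2_eq_square field_simps)
  ultimately show ?thesis
    unfolding u_def[symmetric] v_def[symmetric] by (simp add: power2_eq_square algebra_simps)
qed

locale gaussian_kernel =
  fixes \<kappa> :: "real^'d \<Rightarrow> real^'d \<Rightarrow> real" and \<theta>1 :: "real^'d \<Rightarrow> real^'d"
    and lam0 C0 q c G :: real
  assumes kernel_continuous: "continuous_on UNIV (\<lambda>(x, y). \<kappa> x y)"
    and kernel_mass: "\<And>x. (\<integral>\<^sup>+y. ennreal (\<kappa> x y) \<partial>lebesgue) = 1"
    and kernel_lower: "\<And>x y. exp (- (norm (\<theta>1 x - y))\<^sup>2 / lam0) / C0 \<le> \<kappa> x y"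
    and kernel_upper: "\<And>x y. \<kappa> x y \<le> C0 * exp (- lam0 * (norm (\<theta>1 x - y))\<^sup>2)"
    and lam0_pos: "0 < lam0" and C0_pos: "0 < C0" and G_nonneg: "0 \<le> G"
    and flow_contracts: "\<And>x. (norm (\<theta>1 x))\<^sup>2 \<le> q * (norm x)\<^sup>2 + c"
    and q: "0 < q" "q < 1" and c_nonneg: "0 \<le> c"
    and gaussian_mass: "(\<integral>\<^sup>+z. ennreal (exp (- (lam0 / 2) * (norm z)\<^sup>2)) \<partial>(lborel :: (real^'d) measure)) \<le> ennreal G"
begin

lemma kernel_nonneg: "0 \<le> \<kappa> x y"
proof -
  have "0 < exp (- (norm (\<theta>1 x - y))\<^sup>2 / lam0) / C0" using C0_pos by simp
  then show ?thesis using kernel_lower[of x y] by linarith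
qed

lemma kernel_le_C0: "\<kappa> x y \<le> C0"
proof -
  have "exp (- lam0 * (norm (\<theta>1 x - y))\<^sup>2) \<le> 1" using lam0_pos by simp
  then have "C0 * exp (- lam0 * (norm (\<theta>1 x - y))\<^sup>2) \<le> C0"
    using C0_pos mult_left_mono[of _ 1 C0] by simp
  then show ?thesis using kernel_upper[of x y] by linarith
qed

lemma kernel_borel_measurable: "(\<lambda>p. \<kappa> (fst p) (snd p)) \<in> borel_measurable borel"
  using borel_measurable_continuous_onI[OF kernel_continuous] by (simp add: case_prod_beta')

lemma bounded_kernel: "bounded_kernel \<kappa> C0"
proof
  have id: "(\<lambda>x::real^'d. x) \<in> lebesgue \<rightarrow>\<^sub>M borel"
    using id_borel_measurable_lebesgue by (simp add: id_def)
  have "(\<lambda>p::(real^'d) \<times> (real^'d). (fst p, snd p)) \<in> (lebesgue \<Otimes>\<^sub>M lebesgue) \<rightarrow>\<^sub>M (borel \<Otimes>\<^sub>M borel)"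
    by (intro measurable_Pair measurable_compose[OF measurable_fst id] measurable_compose[OF measurable_snd id])
  then have "(\<lambda>p. p) \<in> (lebesgue \<Otimes>\<^sub>M lebesgue) \<rightarrow>\<^sub>M (borel :: ((real^'d) \<times> (real^'d)) measure)"
    by (simp add: borel_prod)
  from measurable_compose[OF this kernel_borel_measurable]
  show "(\<lambda>p. \<kappa> (fst p) (snd p)) \<in> borel_measurable (lebesgue \<Otimes>\<^sub>M lebesgue)" .
qed (simp_all add: kernel_nonneg kernel_le_C0)

definition "M2 = C0 * (2 / lam0) * G"

lemma M2_nonneg: "0 \<le> M2"
  using lam0_pos C0_pos G_nonneg by (simp add: M2_def)

lemma sq_dist_mult_kernel_le:
  "(norm (y - \<theta>1 x))\<^sup>2 * \<kappa> x y \<le> C0 * (2 / lam0) * exp (- (lam0 / 2) * (norm (y - \<theta>1 x))\<^sup>2)"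
proof -
  define r where "r = (norm (y - \<theta>1 x))\<^sup>2"
  \<comment> \<open>half of the Gaussian decay absorbs the factor r\<close>
  have "lam0 * r / 2 \<le> exp (lam0 * r / 2)"
    using exp_ge_add_one_self[of "lam0 * r / 2"] by linarith
  then have "r \<le> (2 / lam0) * exp (lam0 * r / 2)" using lam0_pos by (simp add: field_simps)
  then have "r * exp (- lam0 * r) \<le> (2 / lam0) * exp (lam0 * r / 2) * exp (- lam0 * r)"
    by (intro mult_right_mono) auto
  also have "\<dots> = (2 / lam0) * exp (- (lam0 / 2) * r)"
    by (simp add: mult.assoc exp_add[symmetric])
  finally have decay: "r * exp (- lam0 * r) \<le> (2 / lam0) * exp (- (lam0 / 2) * r)" .
  have "r * \<kappa> x y \<le> r * (C0 * exp (- lam0 * r))"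
    using kernel_upper[of x y] by (intro mult_left_mono) (auto simp: r_def norm_minus_commute)
  also have "\<dots> = C0 * (r * exp (- lam0 * r))" by simp
  also have "\<dots> \<le> C0 * ((2 / lam0) * exp (- (lam0 / 2) * r))"
    using decay C0_pos by (intro mult_left_mono) auto
  finally show ?thesis by (simp add: r_def mult.assoc)
qed

lemma kernel_second_moment:
  "(\<integral>\<^sup>+y. ennreal ((norm (y - \<theta>1 x))\<^sup>2 * \<kappa> x y) \<partial>lebesgue) \<le> ennreal M2"
proof -
  define t where "t = \<theta>1 x"
  note pointwise = sq_dist_mult_kernel_le[of _ x, folded t_def]
  have "(\<integral>\<^sup>+y. ennreal ((norm (y - t))\<^sup>2 * \<kappa> x y) \<partial>lebesgue)
      \<le> (\<integral>\<^sup>+y. ennreal (C0 * (2 / lam0)) * ennreal (exp (- (lam0 / 2) * (norm (y - t))\<^sup>2)) \<partial>lebesgue)"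
  proof (intro nn_integral_mono)
    fix y
    have "ennreal ((norm (y - t))\<^sup>2 * \<kappa> x y) \<le> ennreal (C0 * (2 / lam0) * exp (- (lam0 / 2) * (norm (y - t))\<^sup>2))"
      by (rule ennreal_leI[OF pointwise])
    also have "\<dots> = ennreal (C0 * (2 / lam0)) * ennreal (exp (- (lam0 / 2) * (norm (y - t))\<^sup>2))"
      using C0_pos lam0_pos by (intro ennreal_mult) auto
    finally show "ennreal ((norm (y - t))\<^sup>2 * \<kappa> x y)
        \<le> ennreal (C0 * (2 / lam0)) * ennreal (exp (- (lam0 / 2) * (norm (y - t))\<^sup>2))" .
  qed
  also have "\<dots> = (\<integral>\<^sup>+y. ennreal (C0 * (2 / lam0)) * ennreal (exp (- (lam0 / 2) * (norm (y - t))\<^sup>2)) \<partial>lborel)"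
    by (simp add: nn_integral_completion)
  also have "\<dots> = ennreal (C0 * (2 / lam0)) * (\<integral>\<^sup>+z. ennreal (exp (- (lam0 / 2) * (norm z)\<^sup>2)) \<partial>(lborel :: (real^'d) measure))"
    by (subst lborel_distr_plus[of t, symmetric]) (simp add: nn_integral_distr nn_integral_cmult)
  also have "\<dots> \<le> ennreal (C0 * (2 / lam0)) * ennreal G"
    by (intro mult_left_mono gaussian_mass) simp
  also have "\<dots> = ennreal M2"
    unfolding M2_def using C0_pos lam0_pos by (intro ennreal_mult'[symmetric]) simp
  finally show ?thesis by (simp add: t_def)
qed

definition "split_eps = (1 - q) / (2 * q)"
definition "drift_rate = (1 + q) / 2"
definition "drift_const = 1 + (1 + split_eps) * c + (1 + 1 / split_eps) * M2"

lemma split_eps_pos: "0 < split_eps" and drift_rate: "0 \<le> drift_rate" "drift_rate < 1"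
  and drift_const_ge_1: "1 \<le> drift_const"
  using q c_nonneg M2_nonneg by (auto simp: split_eps_def drift_rate_def drift_const_def)

lemma kernel_drift:
  "(\<integral>\<^sup>+y. ennreal (rho2 y * \<kappa> x y) \<partial>lebesgue) \<le> ennreal (drift_rate * rho2 x + drift_const)"
proof -
  define e t where "e = split_eps" and "t = \<theta>1 x"
  define A B where "A = 1 + (1 + e) * (norm t)\<^sup>2" and "B = 1 + 1 / e"
  have AB: "0 \<le> A" "0 \<le> B" using split_eps_pos by (auto simp: A_def B_def e_def)
  have [measurable]: "(\<lambda>y. \<kappa> x y) \<in> borel_measurable lebesgue"
    using bounded_kernel.kernel_measurable_snd[OF bounded_kernel] .
  have [measurable]: "(\<lambda>y. (norm (y - t))\<^sup>2) \<in> borel_measurable lebesgue"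
    by (rule measurable_completion) simp
  have "(\<integral>\<^sup>+y. ennreal (rho2 y * \<kappa> x y) \<partial>lebesgue)
      \<le> (\<integral>\<^sup>+y. ennreal A * ennreal (\<kappa> x y) + ennreal B * ennreal ((norm (y - t))\<^sup>2 * \<kappa> x y) \<partial>lebesgue)"
  proof (intro nn_integral_mono)
    fix y
    have "(norm y)\<^sup>2 \<le> (1 + e) * (norm t)\<^sup>2 + B * (norm (y - t))\<^sup>2"
      unfolding B_def using split_eps_pos by (simp add: e_def norm_sq_le_peter_paul)
    then have "rho2 y * \<kappa> x y \<le> (A + B * (norm (y - t))\<^sup>2) * \<kappa> x y"
      using kernel_nonneg[of x y] by (intro mult_right_mono) (simp_all add: rho2_def A_def)
    then show "ennreal (rho2 y * \<kappa> x y)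
        \<le> ennreal A * ennreal (\<kappa> x y) + ennreal B * ennreal ((norm (y - t))\<^sup>2 * \<kappa> x y)"
      using AB kernel_nonneg[of x y]
      by (simp add: ennreal_mult[symmetric] ennreal_plus[symmetric] ennreal_leI algebra_simps del: ennreal_plus)
  qed
  also have "\<dots> = ennreal A * (\<integral>\<^sup>+y. ennreal (\<kappa> x y) \<partial>lebesgue)
      + ennreal B * (\<integral>\<^sup>+y. ennreal ((norm (y - t))\<^sup>2 * \<kappa> x y) \<partial>lebesgue)"
    by (subst nn_integral_add) (auto simp: nn_integral_cmult)
  also have "\<dots> \<le> ennreal A * 1 + ennreal B * ennreal M2"
    unfolding kernel_mass t_def by (intro add_mono mult_left_mono kernel_second_moment) auto
  also have "\<dots> = ennreal (A + B * M2)"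
    using AB M2_nonneg by (simp add: ennreal_mult)
  also have "\<dots> \<le> ennreal (drift_rate * rho2 x + drift_const)"
  proof (rule ennreal_leI)
    have "(1 + e) * (norm t)\<^sup>2 \<le> (1 + e) * (q * (norm x)\<^sup>2 + c)"
      using flow_contracts[of x] split_eps_pos by (intro mult_left_mono) (auto simp: t_def e_def)
    also have "\<dots> = drift_rate * (norm x)\<^sup>2 + (1 + e) * c"
      using q by (simp add: e_def split_eps_def drift_rate_def field_simps)
    finally show "A + B * M2 \<le> drift_rate * rho2 x + drift_const"
      using drift_rate by (simp add: A_def B_def drift_const_def rho2_def e_def algebra_simps)
  qed
  finally show ?thesis .
qed

definition "small_level = 8 * drift_const / (1 - drift_rate)"
definition "minor_eps = exp (- (sqrt (q * small_level + c) + 1)\<^sup>2 / lam0) / C0"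

lemma kernel_minorization:
  assumes "rho2 x \<le> small_level" "y \<in> cball 0 1"
  shows "minor_eps \<le> \<kappa> x y"
proof -
  have "(norm x)\<^sup>2 \<le> small_level" using assms(1) by (simp add: rho2_def)
  then have "q * (norm x)\<^sup>2 \<le> q * small_level" using q by (intro mult_left_mono) auto
  then have "(norm (\<theta>1 x))\<^sup>2 \<le> q * small_level + c" using flow_contracts[of x] by linarith
  then have "norm (\<theta>1 x) \<le> sqrt (q * small_level + c)" by (rule real_le_rsqrt)
  then have "norm (\<theta>1 x - y) \<le> sqrt (q * small_level + c) + 1"
    using norm_triangle_ineq4[of "\<theta>1 x" y] assms(2) by simp
  then have "(norm (\<theta>1 x - y))\<^sup>2 \<le> (sqrt (q * small_level + c) + 1)\<^sup>2"
    by (intro power_mono) auto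
  then have "minor_eps \<le> exp (- (norm (\<theta>1 x - y))\<^sup>2 / lam0) / C0"
    unfolding minor_eps_def using lam0_pos C0_pos by (intro divide_right_mono) (auto simp: divide_right_mono)
  then show ?thesis using kernel_lower[of x y] by linarith
qed

lemma harris_kernel: "harris_kernel \<kappa> C0 drift_rate drift_const minor_eps small_level (cball 0 1)"
proof -
  interpret bounded_kernel \<kappa> C0 by (rule bounded_kernel)
  have "0 < measure lebesgue (cball (0::real^'d) 1)"
    using content_cball_pos[of 1 "0::real^'d"] by simp
  moreover have "emeasure lebesgue (cball (0::real^'d) 1) < \<infinity>"
    using emeasure_lborel_cball_finite[of "0::real^'d" 1] by simp
  ultimately show ?thesis
    using kernel_mass kernel_drift kernel_minorization drift_rate drift_const_ge_1 C0_pos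
    by unfold_locales (auto simp: small_level_def minor_eps_def)
qed

end

lemma gaussian_kernel_transition_density:
  fixes b :: "real^'d \<Rightarrow> real^'d" and W :: "real \<Rightarrow> 'a \<Rightarrow> real^'d"
  assumes BM: "std_brownian M W" and dens: "\<And>x. distributed M lborel (X x 1) (\<lambda>y. ennreal (\<kappa> x y))"
    and flow: "is_forward_flow b \<theta>" and c2: "0 < c2" and dissip: "\<And>x. b x \<bullet> x \<le> c1 - c2 * (norm x)\<^sup>2"
    and "continuous_on UNIV (\<lambda>(x, y). \<kappa> x y)"
    and "\<And>x y. exp (- (norm (\<theta> 1 x - y))\<^sup>2 / lam0) / C0 \<le> \<kappa> x y"
    and "\<And>x y. \<kappa> x y \<le> C0 * exp (- lam0 * (norm (\<theta> 1 x - y))\<^sup>2)"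
    and "0 < lam0" "0 < C0"
  shows "\<exists>G. gaussian_kernel \<kappa> (\<theta> 1) lam0 C0 (exp (- 2 * c2)) (c1 / c2) G"
proof
  have prob: "prob_space M" using BM by (simp add: std_brownian_def)
  define G where "G = enn2real (\<integral>\<^sup>+z. ennreal (exp (- (lam0 / 2) * (norm z)\<^sup>2)) \<partial>(lborel :: (real^'d) measure))"
  show "gaussian_kernel \<kappa> (\<theta> 1) lam0 C0 (exp (- 2 * c2)) (c1 / c2) G"
  proof
    show "(\<integral>\<^sup>+y. ennreal (\<kappa> x y) \<partial>lebesgue) = 1" for x
      using prob_space.distributed_nn_integral_density[OF prob dens] by (simp add: nn_integral_completion)
    show "(norm (\<theta> 1 x))\<^sup>2 \<le> exp (- 2 * c2) * (norm x)\<^sup>2 + c1 / c2" for x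
      by (rule dissipative_flow_norm_sq_le[OF flow c2 dissip])
    show "(\<integral>\<^sup>+z. ennreal (exp (- (lam0 / 2) * (norm z)\<^sup>2)) \<partial>(lborel :: (real^'d) measure)) \<le> ennreal G"
      using gaussian_nn_integral_finite[OF BM, of "lam0 / 2"] \<open>0 < lam0\<close> by (simp add: G_def less_top)
    show "0 \<le> c1 / c2" using dissip[of 0] c2 by simp
  qed (use assms c2 in \<open>auto simp: G_def\<close>)
qed

lemma compact_imp_lebesgue_finite:
  fixes D :: "'a::euclidean_space set"
  assumes "compact D" shows "D \<in> sets lebesgue" "emeasure lebesgue D < \<infinity>"
proof -
  have "D \<in> sets borel" using assms by (simp add: compact_imp_closed borel_closed)
  then show "D \<in> sets lebesgue" "emeasure lebesgue D < \<infinity>"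
    using emeasure_bounded_finite[OF compact_imp_bounded[OF assms]] by simp_all
qed

theorem proposition3p8:
  fixes b :: "real^'d \<Rightarrow> real^'d"
    and M :: "'a measure"
    and W :: "real \<Rightarrow> 'a \<Rightarrow> real^'d"
    and X :: "real^'d \<Rightarrow> real \<Rightarrow> 'a \<Rightarrow> real^'d"
    and \<theta> :: "real \<Rightarrow> real^'d \<Rightarrow> real^'d"
    and \<kappa> :: "real^'d \<Rightarrow> real^'d \<Rightarrow> real"
    and D :: "(real^'d) set"
    and lam\<^sub>0 lam\<^sub>1 C\<^sub>0 C\<^sub>1 :: real
  assumes loc_lip: "\<And>x\<^sub>0. \<exists>K>0. \<exists>\<delta>\<^sub>0>0. \<forall>x. norm (x\<^sub>0 - x) < \<delta>\<^sub>0 \<longrightarrow>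
                         norm (b x\<^sub>0 - b x) \<le> K * norm (x\<^sub>0 - x)"
    and dissip: "\<exists>c\<^sub>1::real. \<exists>c\<^sub>2>0. \<forall>x. b x \<bullet> x \<le> c\<^sub>1 - c\<^sub>2 * (norm x)\<^sup>2"
    and BM: "std_brownian M W"
    and sol: "\<And>x. sde_solution M b W x (X x)"
    and flow: "is_forward_flow b \<theta>"
    and dens: "\<And>x. distributed M lborel (X x 1) (\<lambda>y. ennreal (\<kappa> x y))"
    and kcont: "continuous_on UNIV (\<lambda>(x, y). \<kappa> x y)"
    and cnst: "0 < lam\<^sub>0" "lam\<^sub>0 \<le> 1" "0 < lam\<^sub>1" "lam\<^sub>1 \<le> 1" "1 \<le> C\<^sub>0" "1 \<le> C\<^sub>1"
    and klow: "\<And>x y. exp (- (norm (\<theta> 1 x - y))\<^sup>2 / lam\<^sub>0) / C\<^sub>0 \<le> \<kappa> x y"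
    and kup: "\<And>x y. \<kappa> x y \<le> C\<^sub>0 * exp (- lam\<^sub>0 * (norm (\<theta> 1 x - y))\<^sup>2)"
    and kgradx: "\<And>x y. \<exists>g. ((\<lambda>x'. \<kappa> x' y) has_derivative (\<lambda>h. g \<bullet> h)) (at x) \<and>
                       norm g \<le> C\<^sub>1 * exp (- lam\<^sub>1 * (norm (\<theta> 1 x - y))\<^sup>2)"
    and kgrady: "\<And>x y. \<exists>g. ((\<lambda>y'. \<kappa> x y') has_derivative (\<lambda>h. g \<bullet> h)) (at y) \<and>
                       norm g \<le> C\<^sub>1 * exp (- lam\<^sub>1 * (norm (\<theta> 1 x - y))\<^sup>2)"
    and D: "compact D" "0 \<in> interior D"
  shows "(\<forall>f\<in>V_B D. (\<lambda>n. strong_norm D ((transfer \<kappa> ^^ n) f)) \<longlonglongrightarrow> 0)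
       \<and> (\<forall>f\<in>V_B D. transfer \<kappa> f \<in> V_B D)
       \<and> (\<forall>g\<in>V_B D. \<exists>f\<in>V_B D. AE y in lebesgue. f y - transfer \<kappa> f y = g y)
       \<and> (\<forall>f\<^sub>1\<in>V_B D. \<forall>f\<^sub>2\<in>V_B D.
            (AE y in lebesgue. f\<^sub>1 y - transfer \<kappa> f\<^sub>1 y = f\<^sub>2 y - transfer \<kappa> f\<^sub>2 y)
            \<longrightarrow> (AE y in lebesgue. f\<^sub>1 y = f\<^sub>2 y))
       \<and> (\<exists>C::real. \<forall>f\<in>V_B D. strong_norm D f \<le> ennreal C * strong_norm D (\<lambda>y. f y - transfer \<kappa> f y))"
proof -
  obtain c1 c2 where c2: "0 < c2" and diss: "\<And>x. b x \<bullet> x \<le> c1 - c2 * (norm x)\<^sup>2"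
    using dissip by blast
  obtain G where "gaussian_kernel \<kappa> (\<theta> 1) lam\<^sub>0 C\<^sub>0 (exp (- 2 * c2)) (c1 / c2) G"
    using gaussian_kernel_transition_density[where X=X and \<kappa>=\<kappa> and \<theta>=\<theta>, OF BM dens flow c2 diss kcont klow kup]
      cnst by auto
  then interpret gaussian_kernel \<kappa> "\<theta> 1" "lam\<^sub>0" "C\<^sub>0" "exp (- 2 * c2)" "c1 / c2" G .
  interpret harris_kernel \<kappa> "C\<^sub>0" drift_rate drift_const minor_eps small_level "cball 0 1"
    by (rule harris_kernel)
  show ?thesis
    by (rule V_B_transfer_properties[OF compact_imp_lebesgue_finite[OF D(1)]])
qed

end
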